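(* Fix a binary $s$-state information source (as defined in the context) and let $\mu(x)$ denote the probability it assigns to a finite binary string $x$. Then there is a sequence $\delta_n\to0$ (as $n\to\infty$) such that for every $n\in\{2,4,8,16,\dots\}$, $$\max_{x\in\{0,1\}^n\cap S(\mathrm{dyadic})}\left(|\sigma(G_x)|+\log_2\mu(x)\right)\le\frac{n}{\log_2 n}\left(16+4\log_2 s+\delta_n\right),$$ where $|\sigma(G_x)|$ is the length of the codeword assigned to $x$ (with the convention $\log_2 0=-\infty$).
   Context: $S(\mathrm{dyadic})$ is the set of binary strings $x$ whose length is a power of two, whose left half differs from its right half, and which contain at least one $0$ and at least one $1$. Graphs. $\mathcal{G}$ is the set of all finite directed acyclic graphs $G$ such that: $G$ has a unique nonterminal root $V_G^r$ from which every other vertex is reachable by a directed path; $G$ has exactly two terminal vertices (no outgoing edges) $T_G^0,T_G^1$; each nonterminal vertex has exactly two outgoing edges, labelled $0$ and $1$, ending at different vertices; each vertex $V$ has a positive integer level $L(V)$ with $L(V_G^r)=1$, $L(T_G^0)=L(T_G^1)$, and levels strictly increasing along directed paths. For binary strings, $y^j$ is $j$ concatenated copies of $y$. Define $\phi_G$ on vertices by $\phi_G(T_G^0)=0$, $\phi_G(T_G^1)=1$, and for nonterminal $V$ with $0$-edge to $V_0$ and $1$-edge to $V_1$, $\phi_G(V)=\phi_G(V_0)^{(2^{L(V_0)-L(V)-1})}\phi_G(V_1)^{(2^{L(V_1)-L(V)-1})}$. $\mathcal{G}^*$ is the set of $G\in\mathcal{G}$ for which $\phi_G$ is one-to-one.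 For each $x\in S(\mathrm{dyadic})$ there is a unique $G\in\mathcal{G}^*$ with $\phi_G(V_G^r)=x$ (the reduced ordered binary decision diagram of the Boolean function whose truth table is $x$); it is denoted $G_x$. Canonical ordering. For $G\in\mathcal{G}^*$ with $j$ vertices, $A_1,\dots,A_j$ is the unique enumeration of the vertices such that $A_1=V_G^r$, and, if $A_{q_1},\dots,A_{q_{j-2}}$ ($q_1<\dots<q_{j-2}$) are the nonterminal vertices and $A_{q_t}$ has $0$-edge to $A_{r_t}$ and $1$-edge to $A_{s_t}$, then listing the distinct entries of $(A_{r_1},A_{s_1},\dots,A_{r_{j-2}},A_{s_{j-2}})$ in order of first left-to-right appearance gives $A_2,\dots,A_j$. Sequences. Entries are symbols $A_m^q$ ($q\ge1$), $A_m^1$ written $A_m$. With $L(T_G^0)=k+1$, $S_1=(A_1)$; for $2\le i\le k+1$, let $U$ be the distinct entries of $S_{i-1}$ in order of first appearance; replace each entry $A_m^q$ of $U$ with $q>1$ by $A_m^{q-1}$, and each entry $A_m$ by $A_{m_0}^{q_0},A_{m_1}^{q_1}$, where $A_{m_0},A_{m_1}$ are the endpoints of the $0$- and $1$-edges from $A_m$ and $q_b=L(A_{m_b})-L(A_m)$; $S_i$ is the concatenation of the replacements in order. $\hat S_i$ is the subsequence of $S_i$ of entries produced from entries of $U$ with exponent $1$. An entry $A_m^q$ of $\hat S_i$ is Type I if $A_m^{q+1}$ appears in $S_{i-1}$, Type II if no $A_m^p$ ($p\ge1$) appears in $S_{i-1}$; $\pi_i^1,\pi_i^2$ are the subsequences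 of Type I, Type II entries of $\hat S_i$. $Q_i$ is the sum of the exponents $q$ over the distinct symbols $A_m^q$ occurring in $\pi_i^2$. $|u|$ is the length of a sequence $u$; for nonempty $u=(u_1,\dots,u_J)$, $H(u)=\sum_{t=1}^J-\log_2\frac{n(u_t)}{J}$ with $n(a)=\#\{t:u_t=a\}$, and $H(\text{empty})=0$; $\tilde u$ is $u$ with every first left-to-right occurrence of a symbol deleted. Codeword. The encoder maps $x\in S(\mathrm{dyadic})$ to a binary codeword $\sigma(G_x)$ from which $x$ is recoverable; for $G\in\mathcal{G}^*$ with $L(T_G^0)=k+1$ the codeword $\sigma(G)$ has length $|\sigma(G)|=1+\sum_{i=2}^{k+1}M_i$, where $M_i=|S_i|+|\hat S_i|+Q_i+\lceil H(\pi_i^1)\rceil+\lceil H(\tilde\pi_i^2)\rceil$. Source. A binary $s$-state information source is given by a state set $\{1,\dots,s\}$, an initial distribution $p_0$ on it, and transition probabilities $p(b,t\mid r)\ge0$ ($b\in\{0,1\}$, states $r,t$) with $\sum_{b,t}p(b,t\mid r)=1$ for each $r$; it assigns to $x=x_1\cdots x_n$ the probability $\mu(x)=\sum_{r_0,\dots,r_n}p_0(r_0)\prod_{i=1}^n p(x_i,r_i\mid r_{i-1})$. *)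

theory Defs
  imports "HOL-Analysis.Analysis"
begin

text \<open>Binary strings are lists of booleans (False = 0, True = 1).\<close>

definition S_dyadic :: "bool list set" where
  "S_dyadic = {x. (\<exists>k. length x = 2 ^ k)
      \<and> take (length x div 2) x \<noteq> drop (length x div 2) x
      \<and> False \<in> set x \<and> True \<in> set x}"

definition rep :: "nat \<Rightarrow> bool list \<Rightarrow> bool list" where
  "rep j y = concat (replicate j y)"

text \<open>A graph: vertex set, root, terminals T0 and T1, the 0-edge and 1-edge
  successor functions (meaningful on nonterminal vertices) and the level function.
  Vertices are natural numbers (any finite graph can be relabelled so).\<close>

record graph =
  verts :: "nat set"
  root :: nat
  term0 :: nat
  term1 :: nat
  succ0 :: "nat \<Rightarrow> nat"
  succ1 :: "nat \<Rightarrow> nat"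
  lev :: "nat \<Rightarrow> nat"

definition nonterms :: "graph \<Rightarrow> nat set" where
  "nonterms G = verts G - {term0 G, term1 G}"

definition edges :: "graph \<Rightarrow> (nat \<times> nat) set" where
  "edges G = {(v, succ0 G v) | v. v \<in> nonterms G} \<union> {(v, succ1 G v) | v. v \<in> nonterms G}"

definition in_calG :: "graph \<Rightarrow> bool" where
  "in_calG G \<longleftrightarrow> finite (verts G)
     \<and> root G \<in> verts G \<and> term0 G \<in> verts G \<and> term1 G \<in> verts G
     \<and> term0 G \<noteq> term1 G \<and> root G \<noteq> term0 G \<and> root G \<noteq> term1 G
     \<and> (\<forall>v\<in>nonterms G. succ0 G v \<in> verts G \<and> succ1 G v \<in> verts G \<and> succ0 G v \<noteq> succ1 G v)
     \<and> (\<forall>v\<in>verts G. (root G, v) \<in> (edges G)\<^sup>*)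
     \<and> (\<forall>v\<in>verts G. lev G v \<ge> 1)
     \<and> lev G (root G) = 1
     \<and> lev G (term0 G) = lev G (term1 G)
     \<and> (\<forall>v\<in>nonterms G. lev G v < lev G (succ0 G v) \<and> lev G v < lev G (succ1 G v))"

text \<open>Since levels strictly
  increase along edges, every directed path in G has fewer than card (verts G) edges,
  so card (verts G) recursion steps suffice (the fuel is never exhausted).\<close>

fun phi_fuel :: "nat \<Rightarrow> graph \<Rightarrow> nat \<Rightarrow> bool list" where
  "phi_fuel 0 G v = (if v = term1 G then [True] else [False])"
| "phi_fuel (Suc f) G v =
     (if v = term0 G then [False]
      else if v = term1 G then [True]
      else rep (2 ^ (lev G (succ0 G v) - lev G v - 1)) (phi_fuel f G (succ0 G v))
         @ rep (2 ^ (lev G (succ1 G v) - lev G v - 1)) (phi_fuel f G (succ1 G v)))"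

definition phi :: "graph \<Rightarrow> nat \<Rightarrow> bool list" where
  "phi G v = phi_fuel (card (verts G)) G v"

definition in_calG_star :: "graph \<Rightarrow> bool" where
  "in_calG_star G \<longleftrightarrow> in_calG G \<and> inj_on (phi G) (verts G)"

text \<open>A symbol A_m^q is represented as the pair (vertex, q).\<close>

definition repl :: "graph \<Rightarrow> nat \<times> nat \<Rightarrow> (nat \<times> nat) list" where
  "repl G a = (case a of (m, q) \<Rightarrow>
     if q > 1 then [(m, q - 1)]
     else [(succ0 G m, lev G (succ0 G m) - lev G m), (succ1 G m, lev G (succ1 G m) - lev G m)])"

definition nextS :: "graph \<Rightarrow> (nat \<times> nat) list \<Rightarrow> (nat \<times> nat) list" where
  "nextS G prev = concat (map (repl G) (remdups prev))"

definition hatS :: "graph \<Rightarrow> (nat \<times> nat) list \<Rightarrow> (nat \<times> nat) list" where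
  "hatS G prev = concat (map (repl G) (filter (\<lambda>a. snd a = 1) (remdups prev)))"

text \<open>Sseq G j is S_(j+1); so Sseq G 0 = S_1 = (A_1).\<close>
fun Sseq :: "graph \<Rightarrow> nat \<Rightarrow> (nat \<times> nat) list" where
  "Sseq G 0 = [(root G, 1)]"
| "Sseq G (Suc j) = nextS G (Sseq G j)"

definition pi1 :: "graph \<Rightarrow> (nat \<times> nat) list \<Rightarrow> (nat \<times> nat) list" where
  "pi1 G prev = filter (\<lambda>(m, q). (m, q + 1) \<in> set prev) (hatS G prev)"

definition pi2 :: "graph \<Rightarrow> (nat \<times> nat) list \<Rightarrow> (nat \<times> nat) list" where
  "pi2 G prev = filter (\<lambda>(m, q). m \<notin> fst ` set prev) (hatS G prev)"

definition Qval :: "graph \<Rightarrow> (nat \<times> nat) list \<Rightarrow> nat" where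
  "Qval G prev = (\<Sum>a\<in>set (pi2 G prev). snd a)"

text \<open>Empirical entropy H(u); H(empty) = 0 holds since the sum is then empty.\<close>
definition Hent :: "'a list \<Rightarrow> real" where
  "Hent u = (\<Sum>t<length u. - log 2 (real (count_list u (u ! t)) / real (length u)))"

fun tilde_aux :: "'a set \<Rightarrow> 'a list \<Rightarrow> 'a list" where
  "tilde_aux seen [] = []"
| "tilde_aux seen (a # u) =
     (if a \<in> seen then a # tilde_aux seen u else tilde_aux (insert a seen) u)"

definition tilde :: "'a list \<Rightarrow> 'a list" where
  "tilde u = tilde_aux {} u"

definition Mval :: "graph \<Rightarrow> (nat \<times> nat) list \<Rightarrow> int" where
  "Mval G prev = int (length (nextS G prev)) + int (length (hatS G prev)) + int (Qval G prev)
      + \<lceil>Hent (pi1 G prev)\<rceil> + \<lceil>Hent (tilde (pi2 G prev))\<rceil>"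

text \<open>Codeword length |sigma(G)| = 1 + sum_(i=2)^(k+1) M_i, where L(T0) = k+1;
  M_i is computed from S_(i-1) = Sseq G (i-2).\<close>
definition sigma_len :: "graph \<Rightarrow> int" where
  "sigma_len G = 1 + (\<Sum>i\<in>{2..lev G (term0 G)}. Mval G (Sseq G (i - 2)))"

text \<open>States are 1..s; p0 is the initial distribution and p b t r = p(b,t|r).\<close>
definition is_source :: "nat \<Rightarrow> (nat \<Rightarrow> real) \<Rightarrow> (bool \<Rightarrow> nat \<Rightarrow> nat \<Rightarrow> real) \<Rightarrow> bool" where
  "is_source s p0 p \<longleftrightarrow> s \<ge> 1
     \<and> (\<forall>r\<in>{1..s}. p0 r \<ge> 0) \<and> (\<Sum>r\<in>{1..s}. p0 r) = 1
     \<and> (\<forall>b r t. r \<in> {1..s} \<longrightarrow> t \<in> {1..s} \<longrightarrow> p b t r \<ge> 0)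
     \<and> (\<forall>r\<in>{1..s}. (\<Sum>b\<in>UNIV. \<Sum>t\<in>{1..s}. p b t r) = 1)"

definition mu :: "nat \<Rightarrow> (nat \<Rightarrow> real) \<Rightarrow> (bool \<Rightarrow> nat \<Rightarrow> nat \<Rightarrow> real) \<Rightarrow> bool list \<Rightarrow> real" where
  "mu s p0 p x = (\<Sum>r\<in>PiE {0..length x} (\<lambda>_. {1..s}).
       p0 (r 0) * (\<Prod>i\<in>{1..length x}. p (x ! (i - 1)) (r i) (r (i - 1))))"

end

theory Submission
  imports Defs
begin

text \<open>Walking down the BDD level by level cuts \<open>x\<close> into blocks: every entry \<open>A\<^sub>m\<^sup>q\<close> of
  \<open>S\<^sub>j\<close> stands for a block \<open>rep (2 ^ (q - 1)) (\<phi> A\<^sub>m)\<close> of length \<open>2 ^ (k - j)\<close> at a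
  determined position of \<open>x\<close>, and the occurrences that are not the last one of their symbol
  give pairwise disjoint segments of \<open>x\<close>. A finite-state source assigns \<open>x\<close> at most the
  product, over these segments, of the probability of the segment summed over the initial state.
  Gibbs' inequality, applied on each level with the sub-probability given by these sums divided
  by \<open>s\<close>, therefore bounds the entropy terms of \<open>|\<sigma>(G\<^sub>x)|\<close> by \<open>- log\<^sub>2 \<mu>(x)\<close> plus
  \<open>log\<^sub>2 s\<close> per segment. All other terms, and the number of segments, are linear in the
  widths \<open>d\<^sub>j = |set S\<^sub>j| \<le> min (2 ^ j) (2 ^ 2 ^ (k - j))\<close>, whose sum is \<open>O(2 ^ k / k)\<close>.\<close>

section \<open>Finite-state sources\<close>

locale finite_state_kernel =
  fixes s :: nat and p :: "bool \<Rightarrow> nat \<Rightarrow> nat \<Rightarrow> real"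
  assumes kernel_nonneg: "\<And>b r t. r \<in> {1..s} \<Longrightarrow> t \<in> {1..s} \<Longrightarrow> p b t r \<ge> 0"
    and kernel_sum: "\<And>r. r \<in> {1..s} \<Longrightarrow> (\<Sum>b\<in>UNIV. \<Sum>t\<in>{1..s}. p b t r) = 1"
begin

text \<open>A state vector \<open>v\<close> weighs the states; \<open>propagate v y t\<close> is the forward recursion of
  the source: the weight of emitting \<open>y\<close> and ending in state \<open>t\<close> when starting from \<open>v\<close>.\<close>

definition mass :: "(nat \<Rightarrow> real) \<Rightarrow> real" where
  "mass v = (\<Sum>r\<in>{1..s}. v r)"

definition nonneg :: "(nat \<Rightarrow> real) \<Rightarrow> bool" where
  "nonneg v \<longleftrightarrow> (\<forall>r\<in>{1..s}. v r \<ge> 0)"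

definition step :: "(nat \<Rightarrow> real) \<Rightarrow> bool \<Rightarrow> nat \<Rightarrow> real" where
  "step v b t = (\<Sum>r\<in>{1..s}. v r * p b t r)"

fun propagate :: "(nat \<Rightarrow> real) \<Rightarrow> bool list \<Rightarrow> nat \<Rightarrow> real" where
  "propagate v [] = v"
| "propagate v (b # y) = propagate (step v b) y"

definition unit_vec :: "nat \<Rightarrow> nat \<Rightarrow> real" where
  "unit_vec r = (\<lambda>t. if t = r then 1 else 0)"

text \<open>Summing over the initial state makes this bound the contribution of an occurrence of \<open>y\<close>
  inside a longer string, whatever the state reached there.\<close>

definition start_sum :: "bool list \<Rightarrow> real" where
  "start_sum y = (\<Sum>r\<in>{1..s}. mass (propagate (unit_vec r) y))"

lemma propagate_append: "propagate v (y @ z) = propagate (propagate v y) z"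
  by (induction y arbitrary: v) auto

lemma nonneg_step: "nonneg v \<Longrightarrow> nonneg (step v b)"
  unfolding nonneg_def step_def by (auto intro!: sum_nonneg mult_nonneg_nonneg kernel_nonneg)

lemma nonneg_propagate: "nonneg v \<Longrightarrow> nonneg (propagate v y)"
  by (induction y arbitrary: v) (auto simp: nonneg_step)

lemma nonneg_unit_vec: "nonneg (unit_vec r)"
  unfolding nonneg_def unit_vec_def by auto

lemma mass_nonneg: "nonneg v \<Longrightarrow> mass v \<ge> 0"
  unfolding nonneg_def mass_def by (auto intro!: sum_nonneg)

lemma mass_unit_vec: "r \<in> {1..s} \<Longrightarrow> mass (unit_vec r) = 1"
  unfolding mass_def unit_vec_def by simp

lemma sum_mass_step: "(\<Sum>b\<in>UNIV. mass (step v b)) = mass v"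
proof -
  have "(\<Sum>b\<in>UNIV. mass (step v b)) = (\<Sum>b\<in>UNIV. \<Sum>t\<in>{1..s}. \<Sum>r\<in>{1..s}. v r * p b t r)"
    unfolding mass_def step_def by simp
  also have "\<dots> = (\<Sum>b\<in>UNIV. \<Sum>r\<in>{1..s}. \<Sum>t\<in>{1..s}. v r * p b t r)"
    by (rule sum.cong[OF refl]) (rule sum.swap)
  also have "\<dots> = (\<Sum>r\<in>{1..s}. v r * (\<Sum>b\<in>UNIV. \<Sum>t\<in>{1..s}. p b t r))"
    by (subst sum.swap) (simp add: sum_distrib_left)
  also have "\<dots> = mass v"
    unfolding mass_def by (rule sum.cong[OF refl]) (simp only: kernel_sum mult_1_right)
  finally show ?thesis .
qed

lemma mass_step_le:
  assumes "nonneg v" shows "mass (step v b) \<le> mass v"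
proof -
  have "mass (step v b) \<le> (\<Sum>b\<in>UNIV. mass (step v b))"
    by (rule member_le_sum) (auto intro: mass_nonneg nonneg_step assms)
  then show ?thesis by (simp only: sum_mass_step)
qed

lemma mass_propagate_le: "nonneg v \<Longrightarrow> mass (propagate v y) \<le> mass v"
proof (induction y arbitrary: v)
  case (Cons b y)
  then show ?case using mass_step_le[of v b] Cons.IH[OF nonneg_step] by (metis order_trans propagate.simps(2))
qed simp

lemma step_unit_vec:
  assumes "r \<in> {1..s}" shows "step (unit_vec r) b = (\<lambda>t. p b t r)"
proof
  fix t
  have "step (unit_vec r) b t = (\<Sum>r'\<in>{1..s}. if r' = r then p b t r' else 0)"
    unfolding step_def unit_vec_def by (intro sum.cong) auto
  then show "step (unit_vec r) b t = p b t r" using assms by simp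
qed

lemma propagate_linear:
  "t \<in> {1..s} \<Longrightarrow> propagate v y t = (\<Sum>r\<in>{1..s}. v r * propagate (unit_vec r) y t)"
proof (induction y arbitrary: v)
  case Nil
  have "(\<Sum>r\<in>{1..s}. v r * unit_vec r t) = (\<Sum>r\<in>{1..s}. if r = t then v r else 0)"
    unfolding unit_vec_def by (rule sum.cong) auto
  then show ?case using Nil by simp
next
  case (Cons b y)
  have "propagate v (b # y) t = (\<Sum>r'\<in>{1..s}. step v b r' * propagate (unit_vec r') y t)"
    using Cons.IH[of "step v b", OF Cons.prems] by simp
  also have "\<dots> = (\<Sum>r'\<in>{1..s}. \<Sum>r\<in>{1..s}. v r * p b r' r * propagate (unit_vec r') y t)"
    unfolding step_def by (simp add: sum_distrib_right)
  also have "\<dots> = (\<Sum>r\<in>{1..s}. \<Sum>r'\<in>{1..s}. v r * (p b r' r * propagate (unit_vec r') y t))"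
    by (subst sum.swap) (simp only: mult.assoc)
  also have "\<dots> = (\<Sum>r\<in>{1..s}. v r * propagate (unit_vec r) (b # y) t)"
  proof (rule sum.cong[OF refl])
    fix r assume "r \<in> {1..s}"
    then have "propagate (unit_vec r) (b # y) t = (\<Sum>r'\<in>{1..s}. p b r' r * propagate (unit_vec r') y t)"
      using Cons.IH[of "step (unit_vec r) b", OF Cons.prems] by (simp add: step_unit_vec)
    then show "(\<Sum>r'\<in>{1..s}. v r * (p b r' r * propagate (unit_vec r') y t))
        = v r * propagate (unit_vec r) (b # y) t"
      by (simp add: sum_distrib_left)
  qed
  finally show ?case .
qed

lemma start_sum_nonneg: "start_sum y \<ge> 0"
  unfolding start_sum_def by (auto intro!: sum_nonneg mass_nonneg nonneg_propagate nonneg_unit_vec)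

lemma start_sum_le: "start_sum y \<le> s"
proof -
  have "start_sum y \<le> (\<Sum>r\<in>{1..s}. 1)"
    unfolding start_sum_def
    by (intro sum_mono) (metis mass_propagate_le nonneg_unit_vec mass_unit_vec)
  then show ?thesis by simp
qed

lemma mass_propagate_le_start_sum:
  assumes "nonneg v" shows "mass (propagate v z) \<le> mass v * start_sum z"
proof -
  have le_mass: "v r \<le> mass v" if "r \<in> {1..s}" for r
    unfolding mass_def using assms that unfolding nonneg_def by (intro member_le_sum) auto
  have nonneg_entry: "propagate (unit_vec r) z t \<ge> 0" if "t \<in> {1..s}" for r t
    using nonneg_propagate[OF nonneg_unit_vec] that unfolding nonneg_def by blast
  have "mass (propagate v z) = (\<Sum>t\<in>{1..s}. \<Sum>r\<in>{1..s}. v r * propagate (unit_vec r) z t)"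
    unfolding mass_def by (intro sum.cong refl propagate_linear)
  also have "\<dots> \<le> (\<Sum>t\<in>{1..s}. \<Sum>r\<in>{1..s}. mass v * propagate (unit_vec r) z t)"
    by (intro sum_mono mult_right_mono le_mass nonneg_entry)
  also have "\<dots> = mass v * start_sum z"
    unfolding start_sum_def mass_def by (simp add: sum_distrib_left) (rule sum.swap)
  finally show ?thesis .
qed

lemma sum_mass_propagate_lists:
  "nonneg v \<Longrightarrow> (\<Sum>z\<in>{z. length z = L}. mass (propagate v z)) = mass v"
proof (induction L arbitrary: v)
  case (Suc L)
  let ?A = "{z :: bool list. length z = L}"
  have lists_Suc: "{z. length z = Suc L} = (\<lambda>(b, z). b # z) ` (UNIV \<times> ?A)"
  proof (intro subset_antisym subsetI)
    fix z :: "bool list" assume "z \<in> {z. length z = Suc L}"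
    then show "z \<in> (\<lambda>(b, z). b # z) ` (UNIV \<times> ?A)" by (cases z) force+
  qed auto
  have "(\<Sum>z\<in>{z. length z = Suc L}. mass (propagate v z))
      = (\<Sum>(b, z)\<in>UNIV \<times> ?A. mass (propagate v (b # z)))"
    unfolding lists_Suc by (subst sum.reindex) (auto simp: inj_on_def case_prod_unfold)
  also have "\<dots> = (\<Sum>b\<in>UNIV. \<Sum>z\<in>?A. mass (propagate (step v b) z))"
    by (simp add: sum.cartesian_product)
  also have "\<dots> = mass v"
    using Suc.IH[OF nonneg_step[OF Suc.prems]] by (simp add: sum_mass_step)
  finally show ?case .
qed simp

lemma sum_start_sum_lists: "(\<Sum>z\<in>{z. length z = L}. start_sum z) = s"
proof -
  have "(\<Sum>z\<in>{z. length z = L}. start_sum z)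
      = (\<Sum>r\<in>{1..s}. \<Sum>z\<in>{z. length z = L}. mass (propagate (unit_vec r) z))"
    unfolding start_sum_def by (rule sum.swap)
  also have "\<dots> = (\<Sum>r\<in>{1..s}. 1)"
    by (intro sum.cong refl) (simp add: sum_mass_propagate_lists nonneg_unit_vec mass_unit_vec)
  finally show ?thesis by simp
qed

end

text \<open>A pair \<open>(a, L)\<close> stands for the segment \<open>take L (drop a x)\<close> of a string \<open>x\<close> of length \<open>n\<close>.\<close>

definition disjoint_segments :: "nat \<Rightarrow> (nat \<times> nat) set \<Rightarrow> bool" where
  "disjoint_segments n I \<longleftrightarrow> finite I \<and> (\<forall>(a, L)\<in>I. 1 \<le> L \<and> a + L \<le> n)
     \<and> (\<forall>(a, L)\<in>I. \<forall>(a', L')\<in>I. (a, L) \<noteq> (a', L') \<longrightarrow> a + L \<le> a' \<or> a' + L' \<le> a)"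

lemma disjoint_segments_remove_last:
  assumes I: "disjoint_segments n I" and aL: "(a, L) \<in> I" and a_max: "a = Max (fst ` I)"
  shows "disjoint_segments a (I - {(a, L)})"
proof -
  have fin: "finite I"
    and nonempty: "\<And>a' L'. (a', L') \<in> I \<Longrightarrow> 1 \<le> L'"
    and disj: "\<And>a' L' a'' L''. (a', L') \<in> I \<Longrightarrow> (a'', L'') \<in> I \<Longrightarrow> (a', L') \<noteq> (a'', L'')
                 \<Longrightarrow> a' + L' \<le> a'' \<or> a'' + L'' \<le> a'"
    using I unfolding disjoint_segments_def by blast+
  have before: "a' + L' \<le> a" if "(a', L') \<in> I - {(a, L)}" for a' L'
  proof -
    have "a' \<le> a" unfolding a_max using that fin by (intro Max_ge) force+
    moreover have "a + L \<le> a' \<or> a' + L' \<le> a" using disj[OF aL, of a' L'] that by auto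
    ultimately show ?thesis using nonempty aL by fastforce
  qed
  show ?thesis
    unfolding disjoint_segments_def
  proof (intro conjI)
    show "finite (I - {(a, L)})" using fin by simp
    show "\<forall>(a', L')\<in>I - {(a, L)}. 1 \<le> L' \<and> a' + L' \<le> a" using nonempty before by blast
    show "\<forall>(a', L')\<in>I - {(a, L)}. \<forall>(a'', L'')\<in>I - {(a, L)}.
        (a', L') \<noteq> (a'', L'') \<longrightarrow> a' + L' \<le> a'' \<or> a'' + L'' \<le> a'"
      using disj by blast
  qed
qed

context finite_state_kernel
begin

lemma mass_propagate_le_prod_segments:
  assumes "nonneg v" "disjoint_segments (length x) I"
  shows "mass (propagate v x) \<le> mass v * (\<Prod>(a, L)\<in>I. start_sum (take L (drop a x)))"
  using assms(2)
proof (induction "card I" arbitrary: I x)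
  case 0
  then have "I = {}" unfolding disjoint_segments_def by simp
  then show ?case using mass_propagate_le[OF assms(1)] by simp
next
  case (Suc c)
  have fin: "finite I" and ne: "I \<noteq> {}" using Suc unfolding disjoint_segments_def by auto
  define a where "a = Max (fst ` I)"
  have "a \<in> fst ` I" unfolding a_def using fin ne by (intro Max_in) auto
  then obtain L where aL: "(a, L) \<in> I" by force
  define J where "J = I - {(a, L)}"
  have J: "disjoint_segments a J"
    unfolding J_def by (rule disjoint_segments_remove_last[OF Suc.prems aL a_def])
  have bound: "a + L \<le> length x" using Suc.prems aL unfolding disjoint_segments_def by auto
  let ?F = "\<lambda>y. \<lambda>(a', L'). start_sum (take L' (drop a' y))"
  have same_segments: "prod (?F (take a x)) J = prod (?F x) J"
    using J unfolding disjoint_segments_def by (intro prod.cong refl) (auto simp: take_drop min_def)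
  have split: "x = take a x @ take L (drop a x) @ drop (a + L) x"
    by (metis append_take_drop_id add.commute drop_drop)
  have "mass (propagate v x)
      = mass (propagate (propagate (propagate v (take a x)) (take L (drop a x))) (drop (a + L) x))"
    by (subst split) (simp only: propagate_append)
  also have "\<dots> \<le> mass (propagate (propagate v (take a x)) (take L (drop a x)))"
    by (intro mass_propagate_le nonneg_propagate assms(1))
  also have "\<dots> \<le> mass (propagate v (take a x)) * start_sum (take L (drop a x))"
    by (rule mass_propagate_le_start_sum[OF nonneg_propagate[OF assms(1)]])
  also have "\<dots> \<le> mass v * prod (?F (take a x)) J * start_sum (take L (drop a x))"
    using Suc.hyps(1)[of J "take a x"] Suc.hyps(2) fin aL J bound
    by (intro mult_right_mono start_sum_nonneg) (auto simp: J_def)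
  also have "\<dots> = mass v * prod (?F x) I"
    using fin aL same_segments unfolding J_def by (simp add: prod.remove mult_ac)
  finally show ?case .
qed

end

lemma sum_PiE_insert:
  assumes "a \<notin> S" "finite S" "finite (B a)" "\<And>i. i \<in> S \<Longrightarrow> finite (B i)"
  shows "(\<Sum>r\<in>PiE (insert a S) B. f r) = (\<Sum>y\<in>B a. \<Sum>r\<in>PiE S B. f (r(a := y)))"
proof -
  have inj: "inj_on (\<lambda>(y, g). g(a := y)) (B a \<times> PiE S B)"
    using inj_combinator'[OF assms(1), of B] by (auto simp: inj_on_def)
  have "(\<Sum>r\<in>PiE (insert a S) B. f r) = (\<Sum>u\<in>B a \<times> PiE S B. f ((\<lambda>(y, g). g(a := y)) u))"
    unfolding PiE_insert_eq by (subst sum.reindex[OF inj]) (simp add: comp_def)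
  also have "\<dots> = (\<Sum>y\<in>B a. \<Sum>r\<in>PiE S B. f (r(a := y)))"
    unfolding sum.cartesian_product by (simp add: case_prod_unfold)
  finally show ?thesis .
qed

context finite_state_kernel
begin

lemma path_sum_eq_propagate:
  assumes "n \<le> length x"
  shows "(\<Sum>r\<in>PiE {0..n} (\<lambda>_. {1..s}). p0 (r 0) * (\<Prod>i\<in>{1..n}. p (x ! (i - 1)) (r i) (r (i - 1))) * g (r n))
       = (\<Sum>t\<in>{1..s}. propagate p0 (take n x) t * g t)"
  using assms
proof (induction n arbitrary: g)
  case 0
  have "{0..0::nat} = insert 0 {}" by simp
  then show ?case by (simp only:) (subst sum_PiE_insert; simp)
next
  case (Suc n)
  let ?W = "\<lambda>r. p0 (r 0) * (\<Prod>i\<in>{1..n}. p (x ! (i - 1)) (r i) (r (i - 1)))"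
  have n: "n < length x" using Suc.prems by simp
  have last_factor: "(\<Prod>i\<in>{1..Suc n}. p (x ! (i - 1)) ((r(Suc n := y)) i) ((r(Suc n := y)) (i - 1)))
      = (\<Prod>i\<in>{1..n}. p (x ! (i - 1)) (r i) (r (i - 1))) * p (x ! n) y (r n)" for r y
  proof -
    have "(\<Prod>i\<in>{1..n}. p (x ! (i - 1)) ((r(Suc n := y)) i) ((r(Suc n := y)) (i - 1)))
        = (\<Prod>i\<in>{1..n}. p (x ! (i - 1)) (r i) (r (i - 1)))"
      by (rule prod.cong) auto
    then show ?thesis by (simp add: prod.cl_ivl_Suc)
  qed
  have "{0..Suc n} = insert (Suc n) {0..n}" by auto
  then have "(\<Sum>r\<in>PiE {0..Suc n} (\<lambda>_. {1..s}). p0 (r 0) * (\<Prod>i\<in>{1..Suc n}. p (x ! (i - 1)) (r i) (r (i - 1))) * g (r (Suc n)))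
      = (\<Sum>y\<in>{1..s}. \<Sum>r\<in>PiE {0..n} (\<lambda>_. {1..s}). p0 ((r(Suc n := y)) 0)
          * (\<Prod>i\<in>{1..Suc n}. p (x ! (i - 1)) ((r(Suc n := y)) i) ((r(Suc n := y)) (i - 1)))
          * g ((r(Suc n := y)) (Suc n)))"
    by (simp only:) (rule sum_PiE_insert; simp)
  also have "\<dots> = (\<Sum>y\<in>{1..s}. \<Sum>r\<in>PiE {0..n} (\<lambda>_. {1..s}). ?W r * p (x ! n) y (r n) * g y)"
    by (simp only: last_factor fun_upd_same fun_upd_other Zero_not_Suc not_False_eq_True mult.assoc)
  also have "\<dots> = (\<Sum>r\<in>PiE {0..n} (\<lambda>_. {1..s}). ?W r * (\<Sum>y\<in>{1..s}. p (x ! n) y (r n) * g y))"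
    by (subst sum.swap) (simp add: sum_distrib_left mult.assoc)
  also have "\<dots> = (\<Sum>t\<in>{1..s}. propagate p0 (take n x) t * (\<Sum>y\<in>{1..s}. p (x ! n) y t * g y))"
    using Suc.IH[of "\<lambda>t. \<Sum>y\<in>{1..s}. p (x ! n) y t * g y"] n by simp
  also have "\<dots> = (\<Sum>y\<in>{1..s}. step (propagate p0 (take n x)) (x ! n) y * g y)"
    unfolding step_def by (simp add: sum_distrib_left sum_distrib_right mult.assoc) (rule sum.swap)
  also have "\<dots> = (\<Sum>y\<in>{1..s}. propagate p0 (take (Suc n) x) y * g y)"
    using n by (simp add: take_Suc_conv_app_nth propagate_append)
  finally show ?case .
qed

lemma mu_eq_mass_propagate: "mu s p0 p x = mass (propagate p0 x)"
  using path_sum_eq_propagate[of "length x" x p0 "\<lambda>_. 1"] unfolding mu_def mass_def by simp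

end

lemma finite_state_kernel_source: "is_source s p0 p \<Longrightarrow> finite_state_kernel s p"
  unfolding is_source_def by unfold_locales auto

lemma mu_le_prod_segments:
  assumes "is_source s p0 p" "disjoint_segments (length x) I"
  shows "mu s p0 p x \<le> (\<Prod>(a, L)\<in>I. finite_state_kernel.start_sum s p (take L (drop a x)))"
proof -
  interpret finite_state_kernel s p by (rule finite_state_kernel_source[OF assms(1)])
  have "nonneg p0" "mass p0 = 1" using assms(1) unfolding is_source_def nonneg_def mass_def by auto
  then show ?thesis
    using mass_propagate_le_prod_segments[OF \<open>nonneg p0\<close> assms(2)] by (simp add: mu_eq_mass_propagate)
qed

section \<open>Powers of words\<close>

lemma length_rep [simp]: "length (rep j y) = j * length y"
  unfolding rep_def by (induction j) auto

lemma rep_add: "rep (i + j) y = rep i y @ rep j y"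
  unfolding rep_def by (simp add: replicate_add)

lemma rep_Suc_0 [simp]: "rep (Suc 0) y = y"
  unfolding rep_def by auto

lemma rep_pow2_Suc: "rep (2 ^ Suc a) y = rep (2 ^ a) y @ rep (2 ^ a) y"
  by (simp add: rep_add[symmetric] mult_2)

definition not_square :: "'a list \<Rightarrow> bool" where
  "not_square w \<longleftrightarrow> length w = 1 \<or> take (length w div 2) w \<noteq> drop (length w div 2) w"

lemma not_square_double: "r \<noteq> [] \<Longrightarrow> \<not> not_square (r @ r)"
  unfolding not_square_def by (cases r) auto

lemma double_inj: "xs @ xs = ys @ ys \<Longrightarrow> xs = ys"
proof -
  assume h: "xs @ xs = ys @ ys"
  have "length xs = length ys" using arg_cong[OF h, of length] by simp
  then show ?thesis using h by simp
qed

lemma rep_pow2_Suc_square: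
  assumes "w \<noteq> []" shows "\<not> not_square (rep (2 ^ Suc b) w)"
proof -
  have "rep (2 ^ b) w \<noteq> []" using assms unfolding rep_def by simp
  then show ?thesis unfolding rep_pow2_Suc by (rule not_square_double)
qed

lemma rep_pow2_inj:
  assumes "rep (2 ^ a) w = rep (2 ^ b) w'" "not_square w" "not_square w'" "w \<noteq> []" "w' \<noteq> []"
  shows "w = w' \<and> a = b"
  using assms
proof (induction a arbitrary: b)
  case 0
  then show ?case using rep_pow2_Suc_square[of w'] by (cases b) auto
next
  case (Suc a)
  show ?case
  proof (cases b)
    case 0
    then show ?thesis using Suc.prems rep_pow2_Suc_square[of w a] by auto
  next
    case (Suc b')
    have "rep (2 ^ a) w @ rep (2 ^ a) w = rep (2 ^ b') w' @ rep (2 ^ b') w'"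
      using Suc.prems(1) unfolding Suc rep_pow2_Suc .
    then have "rep (2 ^ a) w = rep (2 ^ b') w'" by (rule double_inj)
    then show ?thesis using Suc.IH[of b'] Suc.prems Suc by simp
  qed
qed

text \<open>Like \<^const>\<open>remdups\<close>, it keeps the last element of each class of equal \<open>f\<close>-values.\<close>

fun remdups_by :: "('a \<Rightarrow> 'b) \<Rightarrow> 'a list \<Rightarrow> 'a list" where
  "remdups_by f [] = []"
| "remdups_by f (a # l) = (if f a \<in> f ` set l then remdups_by f l else a # remdups_by f l)"

lemma map_remdups_by: "map f (remdups_by f l) = remdups (map f l)"
  by (induction l) auto

lemma set_remdups_by: "set (remdups_by f l) \<subseteq> set l"
  by (induction l) auto

lemma sorted_wrt_remdups_by: "sorted_wrt R l \<Longrightarrow> sorted_wrt R (remdups_by f l)"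
  by (induction l) (use set_remdups_by in fastforce)+

lemma distinct_remdups_by: "distinct l \<Longrightarrow> distinct (remdups_by f l)"
  by (induction l) (use set_remdups_by in fastforce)+

lemma sum_list_map_eq_sum_of_count:
  fixes f :: "'a \<Rightarrow> 'b :: semiring_1"
  shows "sum_list (map f xs) = (\<Sum>y\<in>set xs. of_nat (count_list xs y) * f y)"
proof (induction xs)
  case (Cons x xs)
  show ?case
  proof (cases "x \<in> set xs")
    case True
    have "(\<Sum>y\<in>set (x # xs). of_nat (count_list (x # xs) y) * f y)
        = (\<Sum>y\<in>set xs. of_nat (count_list xs y) * f y + (if y = x then f y else 0))"
      using True by (intro sum.cong) (auto simp: algebra_simps)
    also have "\<dots> = (\<Sum>y\<in>set xs. of_nat (count_list xs y) * f y) + f x"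
      using True by (simp add: sum.distrib sum.delta')
    finally show ?thesis using Cons by (simp add: add.commute)
  next
    case False
    have "(\<Sum>y\<in>set xs. of_nat (count_list (x # xs) y) * f y) = (\<Sum>y\<in>set xs. of_nat (count_list xs y) * f y)"
      using False by (intro sum.cong) auto
    then show ?thesis using Cons False by simp
  qed
qed simp

section \<open>Leveled graphs and the map \<^const>\<open>phi\<close>\<close>

locale leveled_graph =
  fixes G :: graph
  assumes in_calG: "in_calG G"
begin

abbreviation leaf_level :: nat where
  "leaf_level \<equiv> lev G (term0 G)"

lemma finite_verts: "finite (verts G)"
  and root_in_verts: "root G \<in> verts G"
  and term0_neq_term1: "term0 G \<noteq> term1 G"
  and root_neq_term0: "root G \<noteq> term0 G"
  and root_neq_term1: "root G \<noteq> term1 G"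
  and lev_root: "lev G (root G) = 1"
  and lev_term1: "lev G (term1 G) = leaf_level"
  using in_calG unfolding in_calG_def by simp_all

lemma succ_in_verts: "v \<in> nonterms G \<Longrightarrow> succ0 G v \<in> verts G \<and> succ1 G v \<in> verts G \<and> succ0 G v \<noteq> succ1 G v"
  and lev_less_succ: "v \<in> nonterms G \<Longrightarrow> lev G v < lev G (succ0 G v) \<and> lev G v < lev G (succ1 G v)"
  using in_calG unfolding in_calG_def by blast+

lemma nonterms_iff: "v \<in> nonterms G \<longleftrightarrow> v \<in> verts G \<and> v \<noteq> term0 G \<and> v \<noteq> term1 G"
  unfolding nonterms_def by auto

lemma root_in_nonterms: "root G \<in> nonterms G"
  using root_in_verts root_neq_term0 root_neq_term1 nonterms_iff by auto

lemma lev_le_leaf_level: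
  assumes "v \<in> verts G" shows "lev G v \<le> leaf_level"
proof -
  let ?S = "lev G ` verts G"
  have fin: "finite ?S" using finite_verts by simp
  obtain w where w: "w \<in> verts G" "lev G w = Max ?S"
    using Max_in[OF fin] root_in_verts by force
  have "w \<notin> nonterms G"
  proof
    assume "w \<in> nonterms G"
    then have "succ0 G w \<in> verts G" "lev G w < lev G (succ0 G w)"
      using succ_in_verts lev_less_succ by auto
    then show False using w Max_ge[OF fin] by force
  qed
  then have "lev G w = leaf_level" using w(1) nonterms_iff lev_term1 by auto
  then show ?thesis using Max_ge[OF fin] assms w by force
qed

lemma lev_nonterm_less: "v \<in> nonterms G \<Longrightarrow> lev G v < leaf_level"
  using lev_less_succ succ_in_verts lev_le_leaf_level by (meson order_less_le_trans)

text \<open>The number of vertices strictly below \<open>v\<close> decreases along edges: it is the measure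
  for recursion on \<^const>\<open>phi\<close>, and it stays below the fuel \<open>card (verts G)\<close>.\<close>

definition rank :: "nat \<Rightarrow> nat" where
  "rank v = card {u \<in> verts G. lev G v < lev G u}"

lemma rank_succ:
  assumes "v \<in> nonterms G"
  shows "rank (succ0 G v) < rank v" "rank (succ1 G v) < rank v"
  using succ_in_verts[OF assms] lev_less_succ[OF assms] finite_verts
  unfolding rank_def by (auto intro!: psubset_card_mono)

lemma rank_less_card: "v \<in> verts G \<Longrightarrow> rank v < card (verts G)"
  unfolding rank_def by (rule psubset_card_mono[OF finite_verts]) auto

lemma terminal_cases: "v \<in> verts G \<Longrightarrow> v \<notin> nonterms G \<Longrightarrow> v = term0 G \<or> v = term1 G"
  using nonterms_iff by auto

lemma phi_fuel_stable:
  "v \<in> verts G \<Longrightarrow> rank v \<le> f \<Longrightarrow> rank v \<le> g \<Longrightarrow> phi_fuel f G v = phi_fuel g G v"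
proof (induction f arbitrary: v g)
  case 0
  then have "v = term0 G \<or> v = term1 G" using rank_succ terminal_cases by fastforce
  then show ?case using term0_neq_term1 by (cases g) auto
next
  case (Suc f)
  show ?case
  proof (cases "v \<in> nonterms G")
    case False
    then have "v = term0 G \<or> v = term1 G" using terminal_cases Suc by blast
    then show ?thesis using term0_neq_term1 by (cases g) auto
  next
    case True
    have r: "rank (succ0 G v) < rank v" "rank (succ1 G v) < rank v" using rank_succ[OF True] by auto
    obtain g' where g: "g = Suc g'" using Suc.prems r by (cases g) auto
    have "phi_fuel f G (succ0 G v) = phi_fuel g' G (succ0 G v)"
      "phi_fuel f G (succ1 G v) = phi_fuel g' G (succ1 G v)"
      using Suc.IH succ_in_verts[OF True] Suc.prems r g by auto
    then show ?thesis using True nonterms_iff g by simp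
  qed
qed

lemma phi_fuel_eq_phi: "v \<in> verts G \<Longrightarrow> rank v \<le> f \<Longrightarrow> phi_fuel f G v = phi G v"
  unfolding phi_def using phi_fuel_stable rank_less_card by (meson less_imp_le)

lemma card_verts_Suc: obtains c where "card (verts G) = Suc c"
  using rank_less_card[OF root_in_verts] by (cases "card (verts G)") auto

lemma phi_nonterm:
  assumes "v \<in> nonterms G"
  shows "phi G v = rep (2 ^ (lev G (succ0 G v) - lev G v - 1)) (phi G (succ0 G v))
                 @ rep (2 ^ (lev G (succ1 G v) - lev G v - 1)) (phi G (succ1 G v))"
proof -
  obtain c where c: "card (verts G) = Suc c" by (rule card_verts_Suc)
  have "rank (succ0 G v) \<le> c" "rank (succ1 G v) \<le> c"
    using rank_succ[OF assms] rank_less_card assms c nonterms_iff by fastforce+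
  then show ?thesis
    using assms nonterms_iff succ_in_verts[OF assms] phi_fuel_eq_phi unfolding phi_def c by auto
qed

lemma phi_term0: "phi G (term0 G) = [False]"
  and phi_term1: "phi G (term1 G) = [True]"
  using term0_neq_term1 by (metis card_verts_Suc phi_def phi_fuel.simps(2))+

lemma length_phi: "v \<in> verts G \<Longrightarrow> length (phi G v) = 2 ^ (leaf_level - lev G v)"
proof (induction "rank v" arbitrary: v rule: less_induct)
  case less
  show ?case
  proof (cases "v \<in> nonterms G")
    case False
    then have "v = term0 G \<or> v = term1 G" using terminal_cases less.prems by blast
    then show ?thesis using phi_term0 phi_term1 lev_term1 by auto
  next
    case True
    let ?s0 = "succ0 G v" and ?s1 = "succ1 G v"
    have s: "?s0 \<in> verts G" "?s1 \<in> verts G" using succ_in_verts[OF True] by auto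
    have lv: "lev G v < lev G ?s0" "lev G v < lev G ?s1" "lev G ?s0 \<le> leaf_level" "lev G ?s1 \<le> leaf_level"
      using lev_less_succ[OF True] lev_le_leaf_level s by auto
    have half: "2 ^ (lev G w - lev G v - 1) * 2 ^ (leaf_level - lev G w) = (2::nat) ^ (leaf_level - lev G v - 1)"
      if "lev G v < lev G w" "lev G w \<le> leaf_level" for w
      using that by (simp add: power_add[symmetric])
    have "length (phi G v) = 2 ^ (leaf_level - lev G v - 1) + 2 ^ (leaf_level - lev G v - 1)"
      unfolding phi_nonterm[OF True]
      using less.hyps[OF rank_succ(1)[OF True] s(1)] less.hyps[OF rank_succ(2)[OF True] s(2)] half lv
      by simp
    also have "\<dots> = 2 ^ (leaf_level - lev G v)" using lv by (cases "leaf_level - lev G v") auto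
    finally show ?thesis .
  qed
qed

lemma phi_nonempty: "v \<in> verts G \<Longrightarrow> phi G v \<noteq> []"
  using length_phi by fastforce

end

text \<open>The string represented by the symbol \<open>A\<^sub>m\<^sup>q\<close>: it is the portion of \<open>x\<close> below an
  occurrence of \<open>A\<^sub>m\<^sup>q\<close> in a sequence \<open>S\<^sub>i\<close>.\<close>

definition block :: "graph \<Rightarrow> nat \<times> nat \<Rightarrow> bool list" where
  "block G a = rep (2 ^ (snd a - 1)) (phi G (fst a))"

locale reduced_bdd = leveled_graph +
  assumes inj_phi: "inj_on (phi G) (verts G)"
begin

lemma not_square_phi: "v \<in> verts G \<Longrightarrow> not_square (phi G v)"
proof (induction "rank v" arbitrary: v rule: less_induct)
  case less
  show ?case
  proof (cases "v \<in> nonterms G")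
    case False
    then have "v = term0 G \<or> v = term1 G" using terminal_cases less.prems by blast
    then show ?thesis using phi_term0 phi_term1 unfolding not_square_def by auto
  next
    case True
    let ?s0 = "succ0 G v" and ?s1 = "succ1 G v"
    let ?A = "rep (2 ^ (lev G ?s0 - lev G v - 1)) (phi G ?s0)"
    let ?B = "rep (2 ^ (lev G ?s1 - lev G v - 1)) (phi G ?s1)"
    have s: "?s0 \<in> verts G" "?s1 \<in> verts G" "?s0 \<noteq> ?s1" using succ_in_verts[OF True] by auto
    have lv: "lev G v < lev G ?s0" "lev G v < lev G ?s1" "lev G ?s0 \<le> leaf_level" "lev G ?s1 \<le> leaf_level"
      using lev_less_succ[OF True] lev_le_leaf_level s by auto
    have "length ?A = 2 ^ (leaf_level - lev G v - 1)" "length ?B = 2 ^ (leaf_level - lev G v - 1)"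
      using length_phi[OF s(1)] length_phi[OF s(2)] lv by (simp_all add: power_add[symmetric])
    then have half: "length (phi G v) div 2 = length ?A" unfolding phi_nonterm[OF True] by simp
    have "?A \<noteq> ?B"
    proof
      assume "?A = ?B"
      then have "phi G ?s0 = phi G ?s1"
        using less.hyps[OF rank_succ(1)[OF True] s(1)] less.hyps[OF rank_succ(2)[OF True] s(2)]
          phi_nonempty s by (blast dest: rep_pow2_inj)
      then show False using inj_phi s unfolding inj_on_def by blast
    qed
    then show ?thesis unfolding not_square_def half unfolding phi_nonterm[OF True] by simp
  qed
qed

lemma block_inj:
  assumes "m \<in> verts G" "m' \<in> verts G" "1 \<le> q" "1 \<le> q'" "block G (m, q) = block G (m', q')"
  shows "(m, q) = (m', q')"
proof -
  have "phi G m = phi G m' \<and> q - 1 = q' - 1"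
    using assms(5) unfolding block_def
    by (intro rep_pow2_inj) (simp_all add: assms not_square_phi phi_nonempty)
  then show ?thesis using inj_phi assms unfolding inj_on_def by auto
qed

end

locale bdd_of_string = reduced_bdd +
  fixes x :: "bool list" and k :: nat
  assumes phi_root: "phi G (root G) = x" and length_x: "length x = 2 ^ k"
begin

lemma leaf_level_eq: "leaf_level = Suc k"
proof -
  have "2 ^ (leaf_level - 1) = (2::nat) ^ k" using length_phi[OF root_in_verts] phi_root length_x lev_root by simp
  then show ?thesis using lev_nonterm_less[OF root_in_nonterms] lev_root by simp
qed

lemma length_block:
  assumes "m \<in> verts G" "lev G m = j + q" "1 \<le> q"
  shows "length (block G (m, q)) = 2 ^ (k - j)"
proof -
  have "q - 1 + (leaf_level - lev G m) = k - j"
    using lev_le_leaf_level[OF assms(1)] assms leaf_level_eq by simp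
  then show ?thesis unfolding block_def using length_phi[OF assms(1)] by (simp add: power_add[symmetric])
qed

end

section \<open>Locating the sequences in the string\<close>

text \<open>To locate the symbols of \<open>S\<^sub>j\<close> inside \<open>x\<close>, each entry \<open>(m, q)\<close> is tagged with the position
  \<open>a\<close> where its block starts; the 1-successor of a split entry starts \<open>2 ^ h\<close> later, where
  \<open>2 ^ h\<close> is the common block length of level \<open>j + 1\<close>.\<close>

definition symbol :: "nat \<times> nat \<times> nat \<Rightarrow> nat \<times> nat" where
  "symbol e = (fst e, fst (snd e))"

definition position :: "nat \<times> nat \<times> nat \<Rightarrow> nat" where
  "position e = snd (snd e)"

definition repl_at :: "graph \<Rightarrow> nat \<Rightarrow> nat \<times> nat \<times> nat \<Rightarrow> (nat \<times> nat \<times> nat) list" where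
  "repl_at G h e = (case e of (m, q, a) \<Rightarrow>
     if q > 1 then [(m, q - 1, a)]
     else [(succ0 G m, lev G (succ0 G m) - lev G m, a), (succ1 G m, lev G (succ1 G m) - lev G m, a + 2 ^ h)])"

fun Sseq_at :: "graph \<Rightarrow> nat \<Rightarrow> nat \<Rightarrow> (nat \<times> nat \<times> nat) list" where
  "Sseq_at G k 0 = [(root G, 1, 0)]"
| "Sseq_at G k (Suc j) = concat (map (repl_at G (k - Suc j)) (remdups_by symbol (Sseq_at G k j)))"

lemma map_symbol_repl_at: "map symbol (repl_at G h e) = repl G (symbol e)"
  unfolding repl_at_def repl_def symbol_def by (cases e) auto

lemma map_symbol_Sseq_at: "map symbol (Sseq_at G k j) = Sseq G j"
proof (induction j)
  case (Suc j)
  have "map symbol (Sseq_at G k (Suc j))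
      = concat (map (\<lambda>e. map symbol (repl_at G (k - Suc j) e)) (remdups_by symbol (Sseq_at G k j)))"
    by (simp add: map_concat comp_def)
  also have "\<dots> = concat (map (repl G) (map symbol (remdups_by symbol (Sseq_at G k j))))"
    by (simp add: map_symbol_repl_at comp_def)
  also have "\<dots> = Sseq G (Suc j)"
    by (simp only: map_remdups_by Suc Sseq.simps nextS_def)
  finally show ?case .
qed (simp add: symbol_def)

lemma dvd_less_imp_add_le:
  assumes "(L::nat) dvd a" "L dvd b" "a < b" shows "a + L \<le> b"
proof -
  obtain i j where ij: "a = L * i" "b = L * j" using assms(1,2) by (elim dvdE)
  then have "i < j" using assms(3) by simp
  then have "L * Suc i \<le> L * j" by (intro mult_le_mono2) simp
  then show ?thesis using ij by simp
qed

lemma sorted_wrt_concat_map_aligned: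
  assumes "sorted_wrt (\<lambda>e e'. position e < position e') R" "\<forall>e\<in>set R. (L::nat) dvd position e"
    "\<forall>e\<in>set R. \<forall>e'\<in>set (f e). position e \<le> position e' \<and> position e' < position e + L"
    "\<forall>e\<in>set R. sorted_wrt (\<lambda>e e'. position e < position e') (f e)"
  shows "sorted_wrt (\<lambda>e e'. position e < position e') (concat (map f R))"
  using assms
proof (induction R)
  case (Cons e R)
  have "position u < position w" if u: "u \<in> set (f e)" and w: "w \<in> set (concat (map f R))" for u w
  proof -
    obtain e2 where e2: "e2 \<in> set R" "w \<in> set (f e2)" using w by auto
    have "position e + L \<le> position e2"
      using Cons.prems(1,2) e2 by (intro dvd_less_imp_add_le) auto
    then show ?thesis using Cons.prems(3) u e2 by fastforce
  qed
  then show ?case using Cons by (simp add: sorted_wrt_append)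
qed simp

lemma take_drop_halves:
  assumes "take (L + L) (drop a x) = u @ w" "length u = L"
  shows "take L (drop a x) = u" "take L (drop (a + L) x) = w"
proof -
  have "take L (drop a x) = take L (take (L + L) (drop a x))" by simp
  then show "take L (drop a x) = u" using assms by simp
  have "take L (drop (a + L) x) = take L (drop L (drop a x))" by (simp add: add.commute)
  also have "\<dots> = drop L (take (L + L) (drop a x))" by (simp only: take_drop)
  finally show "take L (drop (a + L) x) = w" using assms by simp
qed

context bdd_of_string
begin

definition located :: "nat \<Rightarrow> nat \<times> nat \<times> nat \<Rightarrow> bool" where
  "located j e \<longleftrightarrow> (case e of (m, q, a) \<Rightarrow> m \<in> verts G \<and> 1 \<le> q \<and> lev G m = j + q
     \<and> 2 ^ (k - j) dvd a \<and> a + 2 ^ (k - j) \<le> 2 ^ k \<and> take (2 ^ (k - j)) (drop a x) = block G (m, q))"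

lemma located_SucI:
  assumes j: "j < k" and e: "located j (m, q, a)"
    and m': "m' \<in> verts G" "1 \<le> q'" "lev G m' = Suc j + q'"
    and a': "a' = a \<or> a' = a + 2 ^ (k - Suc j)"
    and seg: "take (2 ^ (k - Suc j)) (drop a' x) = block G (m', q')"
  shows "located (Suc j) (m', q', a')"
proof -
  define h where "h = k - Suc j"
  have "k - j = Suc h" using j unfolding h_def by simp
  then have double: "(2::nat) ^ (k - j) = 2 ^ h + 2 ^ h" by simp
  have dv: "2 ^ (k - j) dvd a" and bd: "a + 2 ^ (k - j) \<le> 2 ^ k"
    using e unfolding located_def by auto
  have "2 ^ h dvd a" using dv double by (metis dvd_add_right_iff dvd_refl dvd_trans)
  then have "2 ^ h dvd a'" "a' + 2 ^ h \<le> 2 ^ k" using a' bd double unfolding h_def by auto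
  then show ?thesis using m' seg unfolding located_def h_def by auto
qed

lemma located_repl_at:
  assumes j: "j < k" and e: "located j (m, q, a)" and e': "e' \<in> set (repl_at G (k - Suc j) (m, q, a))"
  shows "located (Suc j) e'"
proof -
  define h where "h = k - Suc j"
  have "k - j = Suc h" using j unfolding h_def by simp
  then have double: "(2::nat) ^ (k - j) = 2 ^ h + 2 ^ h" by simp
  have m: "m \<in> verts G" and q: "1 \<le> q" "lev G m = j + q"
    and seg: "take (2 ^ h + 2 ^ h) (drop a x) = block G (m, q)"
    using e double unfolding located_def by auto
  show ?thesis
  proof (cases "q > 1")
    case True
    then have e': "e' = (m, q - 1, a)" using e' unfolding repl_at_def by simp
    obtain n where n: "q - 1 = Suc n" using True by (cases "q - 1") auto
    then have "block G (m, q) = block G (m, q - 1) @ block G (m, q - 1)"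
      unfolding block_def using rep_pow2_Suc by simp
    moreover have "length (block G (m, q - 1)) = 2 ^ h"
      using length_block[OF m, of "Suc j" "q - 1"] q True unfolding h_def by simp
    ultimately have "take (2 ^ h) (drop a x) = block G (m, q - 1)"
      using take_drop_halves(1)[of "2 ^ h" a x "block G (m, q - 1)" "block G (m, q - 1)"] seg by simp
    then show ?thesis using located_SucI[OF j e m] True q unfolding e' h_def by simp
  next
    case False
    then have q1: "q = 1" using q by simp
    have "lev G m < leaf_level" using q q1 j leaf_level_eq by simp
    then have "m \<noteq> term0 G" "m \<noteq> term1 G" using lev_term1 by (metis less_irrefl)+
    then have "m \<in> nonterms G" using m nonterms_iff by blast
    note succ = succ_in_verts[OF this] lev_less_succ[OF this] phi_nonterm[OF this]
    let ?A = "block G (succ0 G m, lev G (succ0 G m) - lev G m)"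
    let ?B = "block G (succ1 G m, lev G (succ1 G m) - lev G m)"
    have "length ?A = 2 ^ h"
      using length_block[of "succ0 G m" "Suc j"] succ q q1 unfolding h_def by simp
    moreover have "block G (m, q) = ?A @ ?B" using succ q1 unfolding block_def by simp
    ultimately have "take (2 ^ h) (drop a x) = ?A" "take (2 ^ h) (drop (a + 2 ^ h) x) = ?B"
      using take_drop_halves[of "2 ^ h" a x ?A ?B] seg by auto
    moreover have "e' = (succ0 G m, lev G (succ0 G m) - lev G m, a)
        \<or> e' = (succ1 G m, lev G (succ1 G m) - lev G m, a + 2 ^ h)"
      using e' q1 unfolding repl_at_def h_def by auto
    ultimately show ?thesis
      using located_SucI[OF j e] succ q q1 unfolding h_def by auto
  qed
qed

lemma located_Sseq_at: "j \<le> k \<Longrightarrow> e \<in> set (Sseq_at G k j) \<Longrightarrow> located j e"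
proof (induction j arbitrary: e)
  case 0
  then show ?case unfolding located_def block_def using root_in_verts lev_root phi_root length_x by simp
next
  case (Suc j)
  then obtain m q a where e0: "(m, q, a) \<in> set (Sseq_at G k j)" "e \<in> set (repl_at G (k - Suc j) (m, q, a))"
    using set_remdups_by by fastforce
  then show ?case using located_repl_at[of j m q a e] Suc.IH[OF _ e0(1)] Suc.prems e0(2) by simp
qed

lemma located_Sseq_atD:
  assumes "j \<le> k" "e \<in> set (Sseq_at G k j)"
  shows "fst (symbol e) \<in> verts G" "1 \<le> snd (symbol e)" "lev G (fst (symbol e)) = j + snd (symbol e)"
    "2 ^ (k - j) dvd position e" "position e + 2 ^ (k - j) \<le> 2 ^ k"
    "take (2 ^ (k - j)) (drop (position e) x) = block G (symbol e)"
  using located_Sseq_at[OF assms] unfolding located_def symbol_def position_def by (auto split: prod.splits)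

lemma Sseq_elem:
  assumes "j \<le> k" "a \<in> set (Sseq G j)"
  shows "fst a \<in> verts G" "1 \<le> snd a" "lev G (fst a) = j + snd a"
proof -
  have "a \<in> set (map symbol (Sseq_at G k j))" using assms(2) by (simp only: map_symbol_Sseq_at)
  then obtain e where "e \<in> set (Sseq_at G k j)" "a = symbol e" by auto
  then show "fst a \<in> verts G" "1 \<le> snd a" "lev G (fst a) = j + snd a"
    using located_Sseq_atD(1-3)[OF assms(1)] by auto
qed

lemma length_block_Sseq: "j \<le> k \<Longrightarrow> a \<in> set (Sseq G j) \<Longrightarrow> length (block G a) = 2 ^ (k - j)"
  using Sseq_elem[of j a] length_block[of "fst a" j "snd a"] by auto

lemma inj_on_block_Sseq: "j \<le> k \<Longrightarrow> inj_on (block G) (set (Sseq G j))"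
  using Sseq_elem block_inj by (intro inj_onI) (metis prod.collapse)

end

lemma sorted_wrt_less_distinct_map:
  "sorted_wrt (\<lambda>e e'. f e < (f e' :: 'b :: order)) l \<Longrightarrow> distinct (map f l)"
  by (induction l) auto

context bdd_of_string
begin

lemma sorted_Sseq_at: "j \<le> k \<Longrightarrow> sorted_wrt (\<lambda>e e'. position e < position e') (Sseq_at G k j)"
proof (induction j)
  case 0 then show ?case by simp
next
  case (Suc j)
  define h where "h = k - Suc j"
  have kj: "k - j = Suc h" using Suc.prems unfolding h_def by simp
  let ?R = "remdups_by symbol (Sseq_at G k j)"
  have sR: "sorted_wrt (\<lambda>e e'. position e < position e') ?R" using Suc by (intro sorted_wrt_remdups_by) simp
  have dR: "\<forall>e\<in>set ?R. 2 ^ (k - j) dvd position e"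
    using located_Sseq_atD(4)[of j] Suc.prems subsetD[OF set_remdups_by[of symbol "Sseq_at G k j"]] by simp
  have ch: "\<forall>e\<in>set ?R. \<forall>e'\<in>set (repl_at G h e). position e \<le> position e' \<and> position e' < position e + 2 ^ (k - j)"
    unfolding kj repl_at_def position_def by (auto split: prod.splits)
  have sc: "\<forall>e\<in>set ?R. sorted_wrt (\<lambda>e e'. position e < position e') (repl_at G h e)"
    unfolding repl_at_def position_def by (auto split: prod.splits)
  show ?case using sorted_wrt_concat_map_aligned[OF sR dR ch sc] unfolding h_def by simp
qed

lemma inj_on_position: "j \<le> k \<Longrightarrow> inj_on position (set (Sseq_at G k j))"
  using sorted_wrt_less_distinct_map[OF sorted_Sseq_at] distinct_map by blast

lemma distinct_Sseq_at: "j \<le> k \<Longrightarrow> distinct (Sseq_at G k j)"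
  using sorted_wrt_less_distinct_map[OF sorted_Sseq_at] distinct_map by blast

lemma Sseq_at_disjoint:
  assumes "j \<le> k" "e \<in> set (Sseq_at G k j)" "e' \<in> set (Sseq_at G k j)" "e \<noteq> e'"
  shows "position e + 2 ^ (k - j) \<le> position e' \<or> position e' + 2 ^ (k - j) \<le> position e"
proof -
  have "position e \<noteq> position e'" using inj_on_position[OF assms(1)] assms(2-4) unfolding inj_on_def by blast
  moreover have "2 ^ (k - j) dvd position e" "2 ^ (k - j) dvd position e'" using located_Sseq_atD(4) assms by auto
  ultimately show ?thesis using dvd_less_imp_add_le by (metis nat_neq_iff)
qed

lemma Sseq_at_Suc_nested:
  assumes "j < k" "e' \<in> set (Sseq_at G k (Suc j))"
  shows "\<exists>e\<in>set (remdups_by symbol (Sseq_at G k j)). position e \<le> position e' \<and> position e' + 2 ^ (k - Suc j) \<le> position e + 2 ^ (k - j)"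
proof -
  obtain e0 where e0R: "e0 \<in> set (remdups_by symbol (Sseq_at G k j))" and ee: "e' \<in> set (repl_at G (k - Suc j) e0)"
    using assms(2) by auto
  have kj: "k - j = Suc (k - Suc j)" using assms by simp
  have "position e0 \<le> position e' \<and> position e' + 2 ^ (k - Suc j) \<le> position e0 + 2 ^ (k - j)"
    using ee unfolding kj repl_at_def position_def by (auto split: prod.splits if_splits)
  then show ?thesis using e0R by blast
qed

lemma Sseq_at_nested:
  assumes "j < j'" "j' \<le> k" "e' \<in> set (Sseq_at G k j')"
  shows "\<exists>e\<in>set (remdups_by symbol (Sseq_at G k j)). position e \<le> position e' \<and> position e' + 2 ^ (k - j') \<le> position e + 2 ^ (k - j)"
  using assms
proof (induction j' arbitrary: e')
  case 0 then show ?case by simp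
next
  case (Suc j'')
  obtain g where gR: "g \<in> set (remdups_by symbol (Sseq_at G k j''))"
    and g: "position g \<le> position e'" "position e' + 2 ^ (k - Suc j'') \<le> position g + 2 ^ (k - j'')"
    using Sseq_at_Suc_nested[of j'' e'] Suc.prems by auto
  show ?case
  proof (cases "j'' = j")
    case True then show ?thesis using gR g by blast
  next
    case False
    have gP: "g \<in> set (Sseq_at G k j'')" by (rule subsetD[OF set_remdups_by gR])
    obtain f where "f \<in> set (remdups_by symbol (Sseq_at G k j))" "position f \<le> position g" "position g + 2 ^ (k - j'') \<le> position f + 2 ^ (k - j)"
      using Suc.IH[OF _ _ gP] Suc.prems False by auto
    then show ?thesis using g by (intro bexI[of _ f]) auto
  qed
qed

definition dropped :: "nat \<Rightarrow> (nat \<times> nat \<times> nat) set" where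
  "dropped j = set (Sseq_at G k j) - set (remdups_by symbol (Sseq_at G k j))"

definition segment_of :: "nat \<Rightarrow> nat \<times> nat \<times> nat \<Rightarrow> nat \<times> nat" where
  "segment_of j e = (position e, 2 ^ (k - j))"

lemma dropped_disjoint:
  assumes "j \<le> j'" "j' \<le> k" "e \<in> dropped j" "e' \<in> dropped j'" "(j, e) \<noteq> (j', e')"
  shows "position e + 2 ^ (k - j) \<le> position e' \<or> position e' + 2 ^ (k - j') \<le> position e"
proof (cases "j = j'")
  case True
  then show ?thesis using Sseq_at_disjoint[of j e e'] assms unfolding dropped_def by auto
next
  case False
  then have lt: "j < j'" using assms by simp
  obtain f where f: "f \<in> set (remdups_by symbol (Sseq_at G k j))" "position f \<le> position e'" "position e' + 2 ^ (k - j') \<le> position f + 2 ^ (k - j)"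
    using Sseq_at_nested[OF lt assms(2), of e'] assms(4) unfolding dropped_def by auto
  have ef: "e \<noteq> f" using f(1) assms(3) unfolding dropped_def by auto
  have "position e + 2 ^ (k - j) \<le> position f \<or> position f + 2 ^ (k - j) \<le> position e"
    using Sseq_at_disjoint[of j e f] ef subsetD[OF set_remdups_by f(1)] assms unfolding dropped_def by auto
  then show ?thesis using f by auto
qed

text \<open>The segments of \<open>x\<close> under the occurrences in \<open>S\<^sub>j\<close> that are not the last occurrence of
  their symbol, for \<open>1 \<le> j \<le> k\<close>. They are pairwise disjoint, since later levels only
  subdivide the segments of the kept occurrences.\<close>

definition repeat_segments :: "(nat \<times> nat) set" where
  "repeat_segments = (\<Union>j\<in>{1..k}. segment_of j ` dropped j)"

lemma finite_dropped: "finite (dropped j)"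
  unfolding dropped_def by simp

lemma disjoint_segments_repeat_segments: "disjoint_segments (length x) repeat_segments"
proof -
  have disj: "fst u + snd u \<le> fst w \<or> fst w + snd w \<le> fst u"
    if u: "u \<in> repeat_segments" and w: "w \<in> repeat_segments" and uw: "u \<noteq> w" for u w
  proof -
    obtain j e j' e' where je: "j \<in> {1..k}" "e \<in> dropped j" "u = segment_of j e"
      and je': "j' \<in> {1..k}" "e' \<in> dropped j'" "w = segment_of j' e'"
      using u w unfolding repeat_segments_def by auto
    then have "(j, e) \<noteq> (j', e')" using uw by auto
    then have "position e + 2 ^ (k - j) \<le> position e' \<or> position e' + 2 ^ (k - j') \<le> position e"
      using dropped_disjoint[of j j' e e'] dropped_disjoint[of j' j e' e] je je' by (cases "j \<le> j'") auto
    then show ?thesis using je je' unfolding segment_of_def by simp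
  qed
  have "\<forall>(a, L)\<in>repeat_segments. 1 \<le> L \<and> a + L \<le> length x"
    unfolding repeat_segments_def dropped_def segment_of_def using located_Sseq_atD(5) length_x by fastforce
  then show ?thesis
    unfolding disjoint_segments_def using finite_dropped disj by (fastforce simp: repeat_segments_def)
qed

lemma sum_dropped:
  fixes F :: "nat \<times> nat \<Rightarrow> real"
  assumes "j \<le> k"
  shows "(\<Sum>e\<in>dropped j. F (symbol e)) = (\<Sum>a\<in>set (Sseq G j). (real (count_list (Sseq G j) a) - 1) * F a)"
proof -
  let ?l = "Sseq_at G k j" and ?R = "remdups_by symbol (Sseq_at G k j)"
  have dl: "distinct ?l" using distinct_Sseq_at[OF assms] .
  have dR: "distinct ?R" using distinct_remdups_by[OF dl] .
  have sub: "set ?R \<subseteq> set ?l" by (rule set_remdups_by)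
  have s1: "(\<Sum>e\<in>set ?l. F (symbol e)) = (\<Sum>a\<in>set (Sseq G j). real (count_list (Sseq G j) a) * F a)"
  proof -
    have "(\<Sum>e\<in>set ?l. F (symbol e)) = sum_list (map (F \<circ> symbol) ?l)"
      using sum_list_distinct_conv_sum_set[OF dl, of "F \<circ> symbol"] by simp
    also have "\<dots> = sum_list (map F (Sseq G j))" by (subst map_symbol_Sseq_at[symmetric]) (simp add: map_map)
    also have "\<dots> = (\<Sum>a\<in>set (Sseq G j). real (count_list (Sseq G j) a) * F a)"
      by (rule sum_list_map_eq_sum_of_count)
    finally show ?thesis .
  qed
  have s2: "(\<Sum>e\<in>set ?R. F (symbol e)) = (\<Sum>a\<in>set (Sseq G j). F a)"
  proof -
    have "(\<Sum>e\<in>set ?R. F (symbol e)) = sum_list (map (F \<circ> symbol) ?R)"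
      using sum_list_distinct_conv_sum_set[OF dR, of "F \<circ> symbol"] by simp
    also have "\<dots> = sum_list (map F (map symbol ?R))" by simp
    also have "\<dots> = sum_list (map F (remdups (Sseq G j)))" by (simp add: map_remdups_by map_symbol_Sseq_at)
    also have "\<dots> = (\<Sum>a\<in>set (Sseq G j). F a)" by (simp add: sum_list_distinct_conv_sum_set)
    finally show ?thesis .
  qed
  have "(\<Sum>e\<in>dropped j. F (symbol e)) = (\<Sum>e\<in>set ?l. F (symbol e)) - (\<Sum>e\<in>set ?R. F (symbol e))"
    unfolding dropped_def by (rule sum_diff[OF _ sub]) simp
  also have "\<dots> = (\<Sum>a\<in>set (Sseq G j). (real (count_list (Sseq G j) a) - 1) * F a)"
    unfolding s1 s2 by (simp add: sum_subtractf[symmetric] left_diff_distrib)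
  finally show ?thesis .
qed

lemma card_dropped:
  assumes "j \<le> k"
  shows "card (dropped j) = length (Sseq G j) - card (set (Sseq G j))"
proof -
  let ?l = "Sseq_at G k j" and ?R = "remdups_by symbol (Sseq_at G k j)"
  have dl: "distinct ?l" using distinct_Sseq_at[OF assms] .
  have dR: "distinct ?R" using distinct_remdups_by[OF dl] .
  have sub: "set ?R \<subseteq> set ?l" by (rule set_remdups_by)
  have "card (dropped j) = card (set ?l) - card (set ?R)" unfolding dropped_def by (rule card_Diff_subset[OF _ sub]) simp
  also have "card (set ?l) = length (Sseq G j)" using distinct_card[OF dl] map_symbol_Sseq_at[of G k j]
    by (metis length_map)
  also have "card (set ?R) = length (map symbol ?R)" using distinct_card[OF dR] by simp
  also have "\<dots> = card (set (Sseq G j))" by (simp add: map_remdups_by map_symbol_Sseq_at length_remdups_card_conv)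
  finally show ?thesis .
qed

lemma repeat_segments_levels_disjoint:
  "\<forall>j\<in>{1..k}. \<forall>j'\<in>{1..k}. j \<noteq> j' \<longrightarrow> (segment_of j ` dropped j) \<inter> (segment_of j' ` dropped j') = {}"
proof (intro ballI impI)
  fix j j' assume "j \<in> {1..k}" "j' \<in> {1..k}" "j \<noteq> j'"
  then have "(2::nat) ^ (k - j) \<noteq> 2 ^ (k - j')" by auto
  then show "(segment_of j ` dropped j) \<inter> (segment_of j' ` dropped j') = {}"
    unfolding segment_of_def by auto
qed

lemma inj_on_dropped:
  assumes "j \<le> k" shows "inj_on (segment_of j) (dropped j)"
proof (rule inj_onI)
  fix e e' assume "e \<in> dropped j" "e' \<in> dropped j" and eq: "segment_of j e = segment_of j e'"
  then have "e \<in> set (Sseq_at G k j)" "e' \<in> set (Sseq_at G k j)" unfolding dropped_def by auto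
  moreover have "position e = position e'" using eq unfolding segment_of_def by simp
  ultimately show "e = e'" by (rule inj_onD[OF inj_on_position[OF assms], rotated 1])
qed

lemma sum_repeat_segments:
  fixes g :: "bool list \<Rightarrow> real"
  shows "(\<Sum>(a, L)\<in>repeat_segments. g (take L (drop a x)))
    = (\<Sum>j\<in>{1..k}. \<Sum>a\<in>set (Sseq G j). (real (count_list (Sseq G j) a) - 1) * g (block G a))"
proof -
  have "(\<Sum>(a, L)\<in>repeat_segments. g (take L (drop a x)))
      = (\<Sum>j\<in>{1..k}. \<Sum>u\<in>segment_of j ` dropped j. (case u of (a, L) \<Rightarrow> g (take L (drop a x))))"
    unfolding repeat_segments_def by (rule sum.UNION_disjoint) (use finite_dropped repeat_segments_levels_disjoint in auto)
  also have "\<dots> = (\<Sum>j\<in>{1..k}. \<Sum>e\<in>dropped j. g (block G (symbol e)))"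
  proof (rule sum.cong[OF refl])
    fix j assume j: "j \<in> {1..k}"
    have "(\<Sum>u\<in>segment_of j ` dropped j. (case u of (a, L) \<Rightarrow> g (take L (drop a x))))
        = (\<Sum>e\<in>dropped j. g (take (2 ^ (k - j)) (drop (position e) x)))"
      using j by (subst sum.reindex[OF inj_on_dropped]) (auto simp: segment_of_def)
    also have "\<dots> = (\<Sum>e\<in>dropped j. g (block G (symbol e)))"
      using j located_Sseq_atD(6) unfolding dropped_def by (intro sum.cong refl) auto
    finally show "(\<Sum>u\<in>segment_of j ` dropped j. (case u of (a, L) \<Rightarrow> g (take L (drop a x))))
        = (\<Sum>e\<in>dropped j. g (block G (symbol e)))" .
  qed
  also have "\<dots> = (\<Sum>j\<in>{1..k}. \<Sum>a\<in>set (Sseq G j). (real (count_list (Sseq G j) a) - 1) * g (block G a))"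
    by (intro sum.cong refl sum_dropped[of _ "\<lambda>a. g (block G a)"]) auto
  finally show ?thesis .
qed

lemma card_repeat_segments: "card repeat_segments = (\<Sum>j\<in>{1..k}. length (Sseq G j) - card (set (Sseq G j)))"
proof -
  have "card repeat_segments = (\<Sum>j\<in>{1..k}. card (segment_of j ` dropped j))"
    unfolding repeat_segments_def by (rule card_UN_disjoint) (use finite_dropped repeat_segments_levels_disjoint in auto)
  also have "\<dots> = (\<Sum>j\<in>{1..k}. card (dropped j))"
    by (intro sum.cong refl card_image inj_on_dropped) auto
  also have "\<dots> = (\<Sum>j\<in>{1..k}. length (Sseq G j) - card (set (Sseq G j)))"
    by (intro sum.cong refl card_dropped) auto
  finally show ?thesis .
qed

end

section \<open>Counting and entropy\<close>

lemma length_concat_map_le: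
  "(\<forall>a\<in>set l. length (f a) \<le> c) \<Longrightarrow> length (concat (map f l)) \<le> c * length l"
  by (induction l) auto

lemma length_repl: "length (repl G a) \<le> 2"
  unfolding repl_def by (cases a) auto

lemma length_nextS: "length (nextS G prev) \<le> 2 * card (set prev)"
proof -
  have "length (nextS G prev) \<le> 2 * length (remdups prev)"
    unfolding nextS_def by (rule length_concat_map_le) (simp add: length_repl)
  then show ?thesis by (simp add: length_remdups_card_conv)
qed

lemma length_hatS: "length (hatS G prev) \<le> 2 * card (set prev)"
proof -
  have "length (hatS G prev) \<le> 2 * length (filter (\<lambda>a. snd a = 1) (remdups prev))"
    unfolding hatS_def by (rule length_concat_map_le) (simp add: length_repl)
  also have "\<dots> \<le> 2 * length (remdups prev)" by simp
  finally show ?thesis by (simp add: length_remdups_card_conv)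
qed

lemma count_filter: "count_list (filter P xs) a = (if P a then count_list xs a else 0)"
  by (induction xs) auto

lemma sum_list_map_filter_split:
  fixes g :: "'a \<Rightarrow> 'b :: comm_monoid_add"
  shows "sum_list (map g l) = sum_list (map g (filter P l)) + sum_list (map g (filter (\<lambda>y. \<not> P y) l))"
  by (induction l) (auto simp: add_ac)

lemma count_nextS:
  "count_list (nextS G prev) a = count_list (hatS G prev) a
     + count_list (concat (map (repl G) (filter (\<lambda>a. snd a \<noteq> 1) (remdups prev)))) a"
  unfolding nextS_def hatS_def count_list_concat map_map by (rule sum_list_map_filter_split)

lemma count_tilde: "count_list (tilde u) a = count_list u a - 1"
proof -
  have "count_list (tilde_aux S u) a = (if a \<in> S then count_list u a else count_list u a - 1)" for S
    by (induction S u rule: tilde_aux.induct) auto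
  then show ?thesis unfolding tilde_def by simp
qed

lemma set_tilde: "set (tilde u) \<subseteq> set u"
  using count_tilde[of u] by (metis count_list_0_iff diff_0_eq_0 subsetI)

text \<open>An entry \<open>A\<^sub>m\<^sup>q\<close> of \<open>\<pi>\<^sub>i\<^sup>1\<close> also occurs in \<open>S\<^sub>i\<close> as the replacement of \<open>A\<^sub>m\<^sup>q\<^sup>+\<^sup>1\<close>,
  outside \<open>hat S\<^sub>i\<close>; and \<open>\<pi>\<^sub>i\<^sup>1\<close>, \<open>\<pi>\<^sub>i\<^sup>2\<close> never share a symbol.\<close>

lemma count_pi1_tilde_pi2_le:
  assumes "snd a \<noteq> 0"
  shows "count_list (pi1 G prev) a + count_list (tilde (pi2 G prev)) a \<le> count_list (nextS G prev) a - 1"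
proof -
  obtain m q where a: "a = (m, q)" by (cases a) auto
  have q: "q \<noteq> 0" using assms a by simp
  have c1: "count_list (pi1 G prev) (m, q) = (if (m, Suc q) \<in> set prev then count_list (hatS G prev) (m, q) else 0)"
    unfolding pi1_def count_filter by simp
  have c2: "count_list (pi2 G prev) (m, q) = (if m \<notin> fst ` set prev then count_list (hatS G prev) (m, q) else 0)"
    unfolding pi2_def count_filter by simp
  show ?thesis
  proof (cases "(m, Suc q) \<in> set prev")
    case True
    then have "m \<in> fst ` set prev" by force
    moreover
    let ?l = "filter (\<lambda>a. snd a \<noteq> 1) (remdups prev)"
    have "repl G (m, Suc q) = [(m, q)]" unfolding repl_def using q by simp
    then have "1 \<in> set (map (\<lambda>y. count_list (repl G y) (m, q)) ?l)" using True q by force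
    then have "1 \<le> count_list (concat (map (repl G) ?l)) (m, q)"
      unfolding count_list_concat map_map comp_def by (rule member_le_sum_list) simp_all
    ultimately show ?thesis using c1 c2 True a unfolding count_nextS by (simp add: count_tilde)
  next
    case False
    then show ?thesis using c1 c2 a unfolding count_nextS by (simp add: count_tilde; linarith)
  qed
qed

lemma Hent_eq_sum_count:
  "Hent u = (\<Sum>a\<in>set u. real (count_list u a) * (- log 2 (real (count_list u a) / real (length u))))"
proof -
  let ?h = "\<lambda>a. - log 2 (real (count_list u a) / real (length u))"
  have "Hent u = sum_list (map ?h u)"
    unfolding Hent_def by (simp add: sum_list_sum_nth atLeast0LessThan)
  then show ?thesis by (simp add: sum_list_map_eq_sum_of_count)
qed

lemma Hent_le_cross_entropy:
  fixes q :: "'a \<Rightarrow> real"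
  assumes pos: "\<forall>a\<in>set u. q a > 0" and sub: "(\<Sum>a\<in>set u. q a) \<le> 1"
  shows "Hent u \<le> (\<Sum>a\<in>set u. real (count_list u a) * (- log 2 (q a)))"
proof (cases "u = []")
  case True
  then show ?thesis by (simp add: Hent_def)
next
  case False
  define J where "J = real (length u)"
  have J: "J > 0" using False unfolding J_def by simp
  have pointwise: "real (count_list u a) * (- log 2 (real (count_list u a) / J)) - real (count_list u a) * (- log 2 (q a))
      \<le> (q a * J - real (count_list u a)) / ln 2" if a: "a \<in> set u" for a
  proof -
    let ?c = "real (count_list u a)"
    have c: "?c > 0" using a by (metis count_list_0_iff gr0I of_nat_0_less_iff)
    have qa: "q a > 0" using pos a by simp
    have "log 2 (q a) - log 2 (?c / J) = log 2 (q a * J / ?c)"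
      using c qa J by (simp add: log_divide log_mult)
    also have "\<dots> \<le> (q a * J / ?c - 1) / ln 2"
      unfolding log_def using ln_le_minus_one[of "q a * J / ?c"] c qa J by (simp add: divide_right_mono)
    finally have "?c * (log 2 (q a) - log 2 (?c / J)) \<le> ?c * ((q a * J / ?c - 1) / ln 2)"
      by (rule mult_left_mono) (use c in auto)
    also have "\<dots> = (q a * J - ?c) / ln 2" using c by (simp add: field_simps)
    finally show ?thesis by (simp add: algebra_simps)
  qed
  have "Hent u - (\<Sum>a\<in>set u. real (count_list u a) * (- log 2 (q a)))
      \<le> (\<Sum>a\<in>set u. (q a * J - real (count_list u a)) / ln 2)"
    unfolding Hent_eq_sum_count J_def[symmetric] sum_subtractf[symmetric] by (rule sum_mono) (rule pointwise)
  also have "\<dots> = (J * (\<Sum>a\<in>set u. q a) - (\<Sum>a\<in>set u. real (count_list u a))) / ln 2"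
    by (simp add: sum_divide_distrib[symmetric] sum_subtractf sum_distrib_left mult.commute)
  also have "(\<Sum>a\<in>set u. real (count_list u a)) = J"
    unfolding J_def using sum_count_set[of u "set u"] by (simp flip: of_nat_sum)
  also have "(J * (\<Sum>a\<in>set u. q a) - J) / ln 2 \<le> 0"
    using sub J by (intro divide_nonpos_pos) (auto simp: mult_left_le)
  finally show ?thesis by simp
qed

lemma Sseq_persist:
  assumes "(m, q) \<in> set (Sseq G i)" "t < q"
  shows "(m, q - t) \<in> set (Sseq G (i + t))"
  using assms
proof (induction t)
  case (Suc t)
  have "(m, q - t) \<in> set (Sseq G (i + t))" "1 < q - t" using Suc by auto
  moreover have "repl G (m, q - t) = [(m, q - t - 1)]" if "1 < q - t" using that unfolding repl_def by simp
  ultimately have "(m, q - t - 1) \<in> set (Sseq G (Suc (i + t)))" by (force simp: nextS_def)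
  then show ?case by (simp add: diff_Suc)
qed simp

lemma set_pi1_subset: "set (pi1 G prev) \<subseteq> set (nextS G prev)"
  and set_pi2_subset: "set (pi2 G prev) \<subseteq> set (nextS G prev)"
  unfolding pi1_def pi2_def hatS_def nextS_def by auto

lemma pi2_vertex_new: "(m, q) \<in> set (pi2 G prev) \<Longrightarrow> m \<notin> fst ` set prev"
  unfolding pi2_def by simp

lemma card_set_Sseq_le_pow2: "card (set (Sseq G j)) \<le> 2 ^ j"
proof (induction j)
  case (Suc j)
  then show ?case using card_length[of "Sseq G (Suc j)"] length_nextS[of G "Sseq G j"] by simp
qed simp

context bdd_of_string
begin

lemma card_set_Sseq_le_dexp: "j \<le> k \<Longrightarrow> card (set (Sseq G j)) \<le> 2 ^ (2 ^ (k - j))"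
proof -
  assume j: "j \<le> k"
  have "card (set (Sseq G j)) = card (block G ` set (Sseq G j))"
    using card_image[OF inj_on_block_Sseq[OF j]] by simp
  also have "\<dots> \<le> card {w :: bool list. length w = 2 ^ (k - j)}"
    by (rule card_mono) (use finite_lists_length_eq[of "UNIV :: bool set"] length_block_Sseq[OF j] in auto)
  finally show ?thesis using card_lists_length_eq[of "UNIV :: bool set"] by simp
qed

text \<open>A vertex enters the sequences at a single level: if it entered at two levels, the copy
  from the earlier one would still be present at the later one.\<close>

lemma pi2_level_unique:
  assumes a: "(m, q) \<in> set (pi2 G (Sseq G j))" and a': "(m, q') \<in> set (pi2 G (Sseq G j'))"
    and jk: "j < k" "j' < k"
  shows "j = j'"
proof (rule ccontr)
  have in_Sseq: "(m, q) \<in> set (Sseq G (Suc j))" "(m, q') \<in> set (Sseq G (Suc j'))"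
    using a a' set_pi2_subset by (metis Sseq.simps(2) subsetD)+
  have lev: "lev G m = Suc j + q" "lev G m = Suc j' + q'"
    using Sseq_elem(3)[OF _ in_Sseq(1)] Sseq_elem(3)[OF _ in_Sseq(2)] jk by auto
  have present: "m \<in> fst ` set (Sseq G j2)" if "(m, p) \<in> set (Sseq G (Suc j1))" "lev G m = Suc j1 + p" "j1 < j2"
    "lev G m = Suc j2 + p2" for j1 j2 p p2
  proof -
    have "(m, p - (j2 - Suc j1)) \<in> set (Sseq G (Suc j1 + (j2 - Suc j1)))"
      by (rule Sseq_persist[OF that(1)]) (use that(2-4) in simp)
    moreover have "Suc j1 + (j2 - Suc j1) = j2" using that(3) by simp
    ultimately show ?thesis by force
  qed
  assume "j \<noteq> j'"
  then consider "j < j'" | "j' < j" by linarith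
  then show False
  proof cases
    case 1
    then show False using present[OF in_Sseq(1) lev(1) 1 lev(2)] pi2_vertex_new[OF a'] by blast
  next
    case 2
    then show False using present[OF in_Sseq(2) lev(2) 2 lev(1)] pi2_vertex_new[OF a] by blast
  qed
qed

text \<open>A type II symbol \<open>(m, q)\<close> survives as \<open>(m, q - t)\<close> on the next \<open>q\<close> levels, and its
  vertex is new on one level only; this injects the units counted by \<^const>\<open>Qval\<close> into the
  distinct symbols of all levels.\<close>

lemma sum_Qval_le: "(\<Sum>j<k. Qval G (Sseq G j)) \<le> (\<Sum>j\<le>k. card (set (Sseq G j)))"
proof -
  define D where "D = Sigma {..<k} (\<lambda>j. Sigma (set (pi2 G (Sseq G j))) (\<lambda>a. {..<snd a}))"
  define E where "E = Sigma {..k} (\<lambda>i. set (Sseq G i))"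
  define f where "f = (\<lambda>(j::nat, a::nat \<times> nat, t::nat). (j + 1 + t, (fst a, snd a - t)))"
  have memD: "j < k" "a \<in> set (Sseq G (Suc j))" "a \<in> set (pi2 G (Sseq G j))" "t < snd a"
    "lev G (fst a) = Suc j + snd a" if "(j, a, t) \<in> D" for j a t
    using that set_pi2_subset[of G "Sseq G j"] Sseq_elem[of "Suc j" a] unfolding D_def by auto
  have "f ` D \<subseteq> E"
  proof
    fix y assume "y \<in> f ` D"
    then obtain j a t where jat: "(j, a, t) \<in> D" "y = f (j, a, t)" by auto
    have "(fst a, snd a - t) \<in> set (Sseq G (Suc j + t))"
      using Sseq_persist[of "fst a" "snd a" G "Suc j" t] memD[OF jat(1)] by simp
    moreover have "j + 1 + t \<le> k"
      using memD[OF jat(1)] lev_le_leaf_level leaf_level_eq Sseq_elem(1)[of "Suc j" a] by fastforce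
    ultimately show "y \<in> E" unfolding E_def jat(2) f_def by simp
  qed
  moreover have "inj_on f D"
  proof (rule inj_onI)
    fix u w assume u: "u \<in> D" and w: "w \<in> D" and eq: "f u = f w"
    obtain j a t j' a' t' where uw: "u = (j, a, t)" "w = (j', a', t')" by (cases u, cases w) auto
    have "fst a = fst a'" using eq unfolding uw f_def by simp
    moreover have "j = j'" using pi2_level_unique memD u w \<open>fst a = fst a'\<close> unfolding uw by (metis prod.collapse)
    moreover have "lev G (fst a) = Suc j + snd a" "lev G (fst a') = Suc j' + snd a'"
      using memD(5) u w unfolding uw by blast+
    ultimately have "a = a'" by (simp add: prod_eq_iff)
    then show "u = w" using eq \<open>j = j'\<close> unfolding uw f_def by simp
  qed
  moreover have "finite E" unfolding E_def by auto
  ultimately have "card D \<le> card E" by (intro card_inj_on_le)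
  moreover have "card D = (\<Sum>j<k. Qval G (Sseq G j))"
    unfolding D_def Qval_def by (simp add: card_SigmaI)
  moreover have "card E = (\<Sum>j\<le>k. card (set (Sseq G j)))"
    unfolding E_def by (simp add: card_SigmaI)
  ultimately show ?thesis by simp
qed

end

section \<open>The main estimate\<close>

lemma log2_nonpos: "0 \<le> y \<Longrightarrow> y \<le> 1 \<Longrightarrow> log 2 (y::real) \<le> 0"
  by (cases "y = 0") (simp add: log_def, simp)

lemma Mval_le:
  "real_of_int (Mval G prev) \<le> 4 * real (card (set prev)) + real (Qval G prev)
     + Hent (pi1 G prev) + Hent (tilde (pi2 G prev)) + 2"
proof -
  have "real_of_int (Mval G prev) = real (length (nextS G prev)) + real (length (hatS G prev))
      + real (Qval G prev) + real_of_int \<lceil>Hent (pi1 G prev)\<rceil> + real_of_int \<lceil>Hent (tilde (pi2 G prev))\<rceil>"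
    unfolding Mval_def by simp
  moreover have "real (length (nextS G prev)) \<le> 2 * real (card (set prev))"
    "real (length (hatS G prev)) \<le> 2 * real (card (set prev))"
    using length_nextS[of G prev] length_hatS[of G prev] by simp_all
  moreover have "real_of_int \<lceil>y\<rceil> \<le> y + 1" for y :: real by simp
  ultimately show ?thesis by (smt (verit))
qed

locale bdd_of_source_string = bdd_of_string +
  fixes s :: nat and p0 :: "nat \<Rightarrow> real" and p :: "bool \<Rightarrow> nat \<Rightarrow> nat \<Rightarrow> real"
  assumes source: "is_source s p0 p" and mu_pos: "mu s p0 p x > 0"
begin

sublocale finite_state_kernel s p
  by (rule finite_state_kernel_source[OF source])

lemma s_pos: "s \<ge> 1"
  using source unfolding is_source_def by simp

text \<open>Gibbs' inequality is applied with these weights: they form a sub-probability on each level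
  because distinct symbols of a level have distinct blocks of the same length.\<close>

definition block_weight :: "nat \<times> nat \<Rightarrow> real" where
  "block_weight a = start_sum (block G a) / real s"

lemma mu_le_prod_repeat_segments: "mu s p0 p x \<le> (\<Prod>(a, L)\<in>repeat_segments. start_sum (take L (drop a x)))"
  by (rule mu_le_prod_segments[OF source disjoint_segments_repeat_segments])

lemma start_sum_repeat_segment_pos:
  assumes "(a, L) \<in> repeat_segments" shows "start_sum (take L (drop a x)) > 0"
proof (rule ccontr)
  assume "\<not> start_sum (take L (drop a x)) > 0"
  then have "start_sum (take L (drop a x)) = 0" using start_sum_nonneg[of "take L (drop a x)"] by simp
  then have "(\<Prod>(a, L)\<in>repeat_segments. start_sum (take L (drop a x))) = 0"
    using disjoint_segments_repeat_segments assms unfolding disjoint_segments_def by (intro prod_zero) force+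
  then show False using mu_le_prod_repeat_segments mu_pos by simp
qed

lemma sum_neg_log_repeat_segments_le:
  "(\<Sum>(a, L)\<in>repeat_segments. - log 2 (start_sum (take L (drop a x)) / real s))
    \<le> real (card repeat_segments) * log 2 (real s) - log 2 (mu s p0 p x)"
proof -
  let ?c = "\<lambda>u. start_sum (take (snd u) (drop (fst u) x))"
  have fin: "finite repeat_segments"
    using disjoint_segments_repeat_segments unfolding disjoint_segments_def by simp
  have pos: "?c u > 0" if "u \<in> repeat_segments" for u
    using start_sum_repeat_segment_pos that by (cases u) auto
  have "(\<Sum>(a, L)\<in>repeat_segments. - log 2 (start_sum (take L (drop a x)) / real s))
      = (\<Sum>u\<in>repeat_segments. log 2 (real s) - log 2 (?c u))"
  proof (intro sum.cong refl)
    fix u assume u: "u \<in> repeat_segments"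
    have "log 2 (?c u / real s) = log 2 (?c u) - log 2 (real s)" using pos[OF u] s_pos by (simp add: log_divide)
    then show "(case u of (a, L) \<Rightarrow> - log 2 (start_sum (take L (drop a x)) / real s))
        = log 2 (real s) - log 2 (?c u)"
      by (simp add: case_prod_beta)
  qed
  also have "\<dots> = real (card repeat_segments) * log 2 (real s) - (\<Sum>u\<in>repeat_segments. log 2 (?c u))"
    by (simp add: sum_subtractf)
  also have "(\<Sum>u\<in>repeat_segments. log 2 (?c u)) = log 2 (\<Prod>u\<in>repeat_segments. ?c u)"
    using ln_prod[OF fin, of ?c] pos unfolding log_def by (force simp: sum_divide_distrib)
  finally have eq: "(\<Sum>(a, L)\<in>repeat_segments. - log 2 (start_sum (take L (drop a x)) / real s))
      = real (card repeat_segments) * log 2 (real s) - log 2 (\<Prod>u\<in>repeat_segments. ?c u)" .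
  have "log 2 (mu s p0 p x) \<le> log 2 (\<Prod>u\<in>repeat_segments. ?c u)"
    using mu_le_prod_repeat_segments mu_pos by (simp add: case_prod_beta)
  then show ?thesis unfolding eq by simp
qed

lemma start_sum_block_pos:
  assumes i: "i \<in> {1..k}" and a: "a \<in> set (Sseq G i)" and c: "count_list (Sseq G i) a \<ge> 2"
  shows "start_sum (block G a) > 0"
proof -
  have ik: "i \<le> k" using i by simp
  have "(\<Sum>e\<in>dropped i. (if symbol e = a then 1 else 0 :: real))
      = (\<Sum>b\<in>set (Sseq G i). (real (count_list (Sseq G i) b) - 1) * (if b = a then 1 else 0))"
    using sum_dropped[OF ik, of "\<lambda>b. if b = a then 1 else 0"] by simp
  also have "\<dots> = real (count_list (Sseq G i) a) - 1"
    using a by (simp add: if_distrib[of "\<lambda>z. _ * z"] sum.delta' cong: if_cong)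
  finally have "(\<Sum>e\<in>dropped i. (if symbol e = a then 1 else 0 :: real)) \<noteq> 0" using c by simp
  then have "\<exists>e\<in>dropped i. symbol e = a" by (rule contrapos_np) (intro sum.neutral, auto)
  then obtain e where e: "e \<in> dropped i" "symbol e = a" by blast
  have "segment_of i e \<in> repeat_segments" unfolding repeat_segments_def using e i by blast
  then have "start_sum (take (2 ^ (k - i)) (drop (position e) x)) > 0"
    using start_sum_repeat_segment_pos unfolding segment_of_def by simp
  moreover have "take (2 ^ (k - i)) (drop (position e) x) = block G a"
    using located_Sseq_atD(6)[OF ik] e unfolding dropped_def by auto
  ultimately show ?thesis by simp
qed

lemma block_weight_nonneg: "block_weight a \<ge> 0"
  and block_weight_le_1: "block_weight a \<le> 1"
  unfolding block_weight_def using start_sum_nonneg start_sum_le s_pos by (simp_all add: divide_le_eq_1)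

lemma sum_block_weight_le_1:
  assumes j: "j \<le> k" and sub: "A \<subseteq> set (Sseq G j)"
  shows "(\<Sum>a\<in>A. block_weight a) \<le> 1"
proof -
  have inj: "inj_on (block G) A" using inj_on_block_Sseq[OF j] sub by (rule inj_on_subset)
  have "(\<Sum>a\<in>A. start_sum (block G a)) = (\<Sum>w\<in>block G ` A. start_sum w)"
    by (simp add: sum.reindex[OF inj])
  also have "\<dots> \<le> (\<Sum>w\<in>{w. length w = 2 ^ (k - j)}. start_sum w)"
    using finite_lists_length_eq[of "UNIV :: bool set"] length_block_Sseq[OF j] sub start_sum_nonneg
    by (intro sum_mono2) auto
  also have "\<dots> = real s" by (rule sum_start_sum_lists)
  finally show ?thesis unfolding block_weight_def using s_pos by (simp add: sum_divide_distrib[symmetric])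
qed

lemma Hent_le_block_weight:
  assumes j: "Suc j \<le> k" and sub: "set u \<subseteq> set (Sseq G (Suc j))"
    and repeated: "\<forall>a\<in>set u. count_list (Sseq G (Suc j)) a \<ge> 2"
  shows "Hent u \<le> (\<Sum>a\<in>set (Sseq G (Suc j)). real (count_list u a) * (- log 2 (block_weight a)))"
proof -
  have "Hent u \<le> (\<Sum>a\<in>set u. real (count_list u a) * (- log 2 (block_weight a)))"
  proof (rule Hent_le_cross_entropy)
    show "\<forall>a\<in>set u. 0 < block_weight a"
      using start_sum_block_pos[of "Suc j"] j sub repeated s_pos unfolding block_weight_def by auto
    show "(\<Sum>a\<in>set u. block_weight a) \<le> 1" by (rule sum_block_weight_le_1[OF j sub])
  qed
  also have "\<dots> = (\<Sum>a\<in>set (Sseq G (Suc j)). real (count_list u a) * (- log 2 (block_weight a)))"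
    by (rule sum.mono_neutral_left) (use sub in \<open>auto simp: count_list_0_iff\<close>)
  finally show ?thesis .
qed

lemma level_entropy:
  assumes j: "j < k"
  shows "Hent (pi1 G (Sseq G j)) + Hent (tilde (pi2 G (Sseq G j)))
    \<le> (\<Sum>a\<in>set (Sseq G (Suc j)). (real (count_list (Sseq G (Suc j)) a) - 1) * (- log 2 (block_weight a)))"
proof -
  let ?S = "Sseq G (Suc j)" and ?u1 = "pi1 G (Sseq G j)" and ?u2 = "tilde (pi2 G (Sseq G j))"
  have j1: "Suc j \<le> k" using j by simp
  have sub: "set ?u1 \<subseteq> set ?S" "set ?u2 \<subseteq> set ?S"
    using set_pi1_subset set_pi2_subset set_tilde by (metis Sseq.simps(2) order_trans)+
  have counts: "real (count_list ?u1 a) + real (count_list ?u2 a) \<le> real (count_list ?S a) - 1"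
    if a: "a \<in> set ?S" for a
  proof -
    have "snd a \<noteq> 0" using Sseq_elem(2)[OF j1 a] by simp
    then have "count_list ?u1 a + count_list ?u2 a \<le> count_list ?S a - 1"
      using count_pi1_tilde_pi2_le[of a G "Sseq G j"] by simp
    moreover have "count_list ?S a \<ge> 1" using a by (metis count_list_0_iff less_one not_le)
    ultimately show ?thesis by linarith
  qed
  have repeated: "count_list ?S a \<ge> 2" if "a \<in> set ?u1 \<or> a \<in> set ?u2" for a
  proof -
    have "count_list ?u1 a + count_list ?u2 a \<ge> 1"
      using that by (metis add_is_0 count_list_0_iff less_one not_le)
    then show ?thesis using counts[of a] that sub by auto
  qed
  have "Hent ?u1 + Hent ?u2
      \<le> (\<Sum>a\<in>set ?S. (real (count_list ?u1 a) + real (count_list ?u2 a)) * (- log 2 (block_weight a)))"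
    using Hent_le_block_weight[OF j1 sub(1)] Hent_le_block_weight[OF j1 sub(2)] repeated
    unfolding distrib_right sum.distrib by (smt (verit))
  also have "\<dots> \<le> (\<Sum>a\<in>set ?S. (real (count_list ?S a) - 1) * (- log 2 (block_weight a)))"
    using counts log2_nonpos[OF block_weight_nonneg block_weight_le_1]
    by (intro sum_mono mult_right_mono) auto
  finally show ?thesis .
qed

end

definition width :: "graph \<Rightarrow> nat \<Rightarrow> real" where
  "width G j = real (card (set (Sseq G j)))"

lemma sum_atLeast2_shift: "(\<Sum>i\<in>{2..Suc k}. f (i - 2)) = (\<Sum>j<k. (f j :: real))"
proof (induction k)
  case (Suc k)
  have "(\<Sum>i\<in>{2..Suc (Suc k)}. f (i - 2)) = (\<Sum>i\<in>{2..Suc k}. f (i - 2)) + f k"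
    by (simp add: sum.cl_ivl_Suc)
  then show ?case using Suc by simp
qed simp

lemma sigma_len_eq:
  assumes "lev G (term0 G) = Suc k"
  shows "real_of_int (sigma_len G) = 1 + (\<Sum>j<k. real_of_int (Mval G (Sseq G j)))"
proof -
  have "real_of_int (sigma_len G) = 1 + (\<Sum>i\<in>{2..Suc k}. real_of_int (Mval G (Sseq G (i - 2))))"
    unfolding sigma_len_def assms by simp
  then show ?thesis using sum_atLeast2_shift[of "\<lambda>j. real_of_int (Mval G (Sseq G j))" k] by simp
qed

context bdd_of_string
begin

text \<open>Each level can only repeat what the doubling of the previous level added.\<close>

lemma card_repeat_segments_le: "real (card repeat_segments) \<le> (\<Sum>j<k. width G j) + 1"
proof -
  have "real (card repeat_segments) = (\<Sum>i\<in>{1..k}. real (length (Sseq G i) - card (set (Sseq G i))))"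
    unfolding card_repeat_segments by simp
  also have "\<dots> \<le> (\<Sum>i\<in>{1..k}. 2 * width G (i - 1) - width G i)"
  proof (rule sum_mono)
    fix i assume "i \<in> {1..k}"
    then obtain j where ij: "i = Suc j" by (cases i) auto
    show "real (length (Sseq G i) - card (set (Sseq G i))) \<le> 2 * width G (i - 1) - width G i"
      using card_length[of "Sseq G i"] length_nextS[of G "Sseq G j"] unfolding ij width_def by simp
  qed
  also have "\<dots> = 2 * (\<Sum>j<k. width G j) - (\<Sum>j<k. width G (Suc j))"
    by (simp add: sum.atLeast1_atMost_eq sum_subtractf sum_distrib_left)
  also have "(\<Sum>j<k. width G (Suc j)) = (\<Sum>j<Suc k. width G j) - width G 0"
    using sum.lessThan_Suc_shift[of "width G" k] by simp
  finally show ?thesis by (simp add: width_def)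
qed

end

context bdd_of_source_string
begin

lemma sum_Hent_le:
  "(\<Sum>j<k. Hent (pi1 G (Sseq G j)) + Hent (tilde (pi2 G (Sseq G j))))
     \<le> real (card repeat_segments) * log 2 (real s) - log 2 (mu s p0 p x)"
proof -
  have "(\<Sum>j<k. Hent (pi1 G (Sseq G j)) + Hent (tilde (pi2 G (Sseq G j))))
      \<le> (\<Sum>j<k. \<Sum>a\<in>set (Sseq G (Suc j)). (real (count_list (Sseq G (Suc j)) a) - 1) * (- log 2 (block_weight a)))"
    by (intro sum_mono level_entropy) simp
  also have "\<dots> = (\<Sum>(a, L)\<in>repeat_segments. - log 2 (start_sum (take L (drop a x)) / real s))"
    using sum_repeat_segments[of "\<lambda>w. - log 2 (start_sum w / real s)"]
    unfolding block_weight_def by (simp add: sum.atLeast1_atMost_eq)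
  also have "\<dots> \<le> real (card repeat_segments) * log 2 (real s) - log 2 (mu s p0 p x)"
    by (rule sum_neg_log_repeat_segments_le)
  finally show ?thesis .
qed

lemma sigma_len_bound:
  "real_of_int (sigma_len G) + log 2 (mu s p0 p x)
    \<le> 1 + 2 * real k + 5 * (\<Sum>j\<le>k. width G j) + ((\<Sum>j\<le>k. width G j) + 1) * log 2 (real s)"
proof -
  let ?D = "\<Sum>j\<le>k. width G j"
  have D_less: "(\<Sum>j<k. width G j) \<le> ?D"
    by (rule sum_mono2) (auto simp: width_def)
  have Q: "(\<Sum>j<k. real (Qval G (Sseq G j))) \<le> ?D"
    using sum_Qval_le unfolding width_def by (simp flip: of_nat_sum)
  have "real (card repeat_segments) * log 2 (real s) \<le> (?D + 1) * log 2 (real s)"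
    using card_repeat_segments_le D_less s_pos by (intro mult_right_mono) auto
  then have H: "(\<Sum>j<k. Hent (pi1 G (Sseq G j)) + Hent (tilde (pi2 G (Sseq G j))))
      \<le> (?D + 1) * log 2 (real s) - log 2 (mu s p0 p x)"
    using sum_Hent_le by linarith
  have "real_of_int (sigma_len G)
      \<le> 1 + (\<Sum>j<k. 4 * width G j + real (Qval G (Sseq G j))
            + (Hent (pi1 G (Sseq G j)) + Hent (tilde (pi2 G (Sseq G j)))) + 2)"
    unfolding sigma_len_eq[OF leaf_level_eq] width_def
    using Mval_le by (simp add: sum_mono add.assoc)
  also have "\<dots> = 1 + 4 * (\<Sum>j<k. width G j) + (\<Sum>j<k. real (Qval G (Sseq G j)))
      + (\<Sum>j<k. Hent (pi1 G (Sseq G j)) + Hent (tilde (pi2 G (Sseq G j)))) + 2 * real k"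
    by (simp add: sum.distrib sum_distrib_left)
  finally show ?thesis using D_less Q H by linarith
qed

end

section \<open>Arithmetic\<close>

definition min_pow_sum :: "nat \<Rightarrow> nat" where
  "min_pow_sum k = (\<Sum>i\<le>k. min (2 ^ (k - i)) (2 ^ (2 ^ i)))"

lemma sum_pow2_tail: "a \<le> k \<Longrightarrow> (\<Sum>i\<in>{Suc a..k}. (2::nat) ^ (k - i)) < 2 ^ (k - a)"
proof -
  assume a: "a \<le> k"
  have "(\<Sum>i\<in>{Suc a..k}. (2::nat) ^ (k - i)) = (\<Sum>t\<in>{0..<k - a}. 2 ^ t)"
    by (rule sum.reindex_bij_witness[of _ "\<lambda>t. k - t" "\<lambda>i. k - i"]) (use a in auto)
  also have "\<dots> = 2 ^ (k - a) - 1" by (rule sum_power2)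
  finally show ?thesis by simp
qed

lemma sum_dexp_le: "(\<Sum>i<Suc a. (2::nat) ^ (2 ^ i)) \<le> 2 * 2 ^ (2 ^ a)"
proof (induction a)
  case (Suc a)
  have "(2::nat) ^ 1 \<le> 2 ^ (2 ^ a)" by (rule power_increasing) simp_all
  moreover have "(2::nat) ^ (2 ^ Suc a) = 2 ^ (2 ^ a) * 2 ^ (2 ^ a)"
    by (simp add: power_add[symmetric] mult_2)
  ultimately have "2 * 2 ^ (2 ^ a) \<le> (2::nat) ^ (2 ^ Suc a)" by simp
  then show ?case using Suc by simp
qed simp

lemma linear_le_pow2: "5 \<le> a \<Longrightarrow> 4 * a + 8 \<le> (2::nat) ^ a"
  by (induction a rule: dec_induct) simp_all

lemma double_plus_one_le_pow2: "8 \<le> h \<Longrightarrow> 2 * h + 1 \<le> (2::nat) ^ (h - 2)"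
proof (induction h rule: dec_induct)
  case (step n)
  then have "Suc n - 2 = Suc (n - 2)" by simp
  then have "2 ^ (Suc n - 2) = 2 * (2::nat) ^ (n - 2)" by (simp only: power_Suc)
  then show ?case using step by simp
qed simp

lemma square_le_pow2: "10 \<le> k \<Longrightarrow> 3 * k * k \<le> (2::nat) ^ k"
proof (induction k rule: dec_induct)
  case (step n)
  have "6 * n + 3 \<le> 3 * n * n" using step mult_le_mono2[of 10 n "3 * n"] by linarith
  then show ?case using step by (simp add: algebra_simps)
qed simp

lemma double_pow2_pred: "1 \<le> k \<Longrightarrow> 2 * (2::nat) ^ (k - 1) = 2 ^ k"
  by (cases k) simp_all

lemma min_pow_sum_head_le:
  assumes k: "64 \<le> k" and a: "2 ^ a \<le> k"
  shows "k * (2 * 2 ^ (2 ^ (a - 1))) \<le> (2::nat) ^ (k - 1)"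
proof -
  define h where "h = k div 2"
  have h8: "8 \<le> h" and hk: "2 * h \<le> k" "k \<le> 2 * h + 1" using k unfolding h_def by auto
  have "2 ^ (a - 1) \<le> h"
    using a h8 unfolding h_def by (cases a) auto
  then have "k * (2 * 2 ^ (2 ^ (a - 1))) \<le> k * (2 * 2 ^ h)" by simp
  also have "\<dots> \<le> 2 ^ (h - 2) * (2 * 2 ^ h)" using double_plus_one_le_pow2[OF h8] hk by simp
  also have "\<dots> = 2 ^ (2 * h - 1)"
  proof -
    have "2 * h - 1 = (h - 2) + Suc h" using h8 by simp
    then show ?thesis by (simp only: power_add power_Suc)
  qed
  also have "\<dots> \<le> 2 ^ (k - 1)" using hk by (intro power_increasing) auto
  finally show ?thesis .
qed

lemma min_pow_sum_mid_tail_le: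
  assumes a: "2 ^ a \<le> k" "k < 2 ^ (a + 1)" and a6: "6 \<le> a" and ak: "a < k"
    and M: "M \<le> min (2 ^ (k - a)) (2 ^ (2 ^ a))" and T: "T < 2 ^ (k - a)"
  shows "2 * k * (M + T) \<le> 5 * (2::nat) ^ k"
proof (cases "2 ^ a + a + 2 \<le> k")
  case True
  then have "M \<le> 2 ^ (k - a - 2)"
    using M order_trans[OF _ power_increasing[of "2 ^ a" "k - a - 2" "2::nat"]] by fastforce
  then have "k * M \<le> 2 ^ (a + 1) * 2 ^ (k - a - 2)" using a(2) by (intro mult_le_mono) auto
  also have "\<dots> = 2 ^ (k - 1)"
  proof -
    have "k - 1 = (a + 1) + (k - a - 2)" using True by simp
    then show ?thesis by (simp only: power_add)
  qed
  finally have kM: "2 * (k * M) \<le> 2 ^ k" using double_pow2_pred[of k] ak by linarith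
  have "k * T \<le> 2 ^ (a + 1) * 2 ^ (k - a)" using a(2) T by (intro mult_le_mono) auto
  also have "\<dots> = 2 * 2 ^ k" using ak by (simp add: power_add[symmetric])
  finally show ?thesis using kM by (simp add: algebra_simps)
next
  case False
  have "4 * k \<le> 5 * 2 ^ a" using False linear_le_pow2[of a] a6 by simp
  then have "4 * k * 2 ^ (k - a) \<le> 5 * 2 ^ a * 2 ^ (k - a)" by simp
  also have "\<dots> = 5 * 2 ^ k" using ak by (simp add: power_add[symmetric])
  finally have "4 * k * 2 ^ (k - a) \<le> 5 * 2 ^ k" .
  moreover have "2 * k * (M + T) \<le> 2 * k * (2 * 2 ^ (k - a))" using M T by simp
  ultimately show ?thesis by (simp add: algebra_simps)
qed

text \<open>With \<open>2 ^ a \<le> k < 2 ^ (a + 1)\<close>, the summands with \<open>i < a\<close> are dominated by the last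
  doubly exponential one, and those with \<open>i \<ge> a\<close> by a geometric series.\<close>

lemma min_pow_sum_bound:
  assumes k: "64 \<le> k" shows "k * min_pow_sum k \<le> 3 * 2 ^ k"
proof -
  obtain a where a: "2 ^ a \<le> k" "k < 2 ^ (a + 1)" using ex_power_ivl1[of 2 k] k by auto
  have a6: "6 \<le> a"
  proof (rule ccontr)
    assume "\<not> 6 \<le> a"
    then have "(2::nat) ^ (a + 1) \<le> 2 ^ 6" by (intro power_increasing) simp_all
    then show False using a k by simp
  qed
  have ak: "a < k" using a(1) less_le_trans[OF less_exp] by blast
  let ?f = "\<lambda>i. min ((2::nat) ^ (k - i)) (2 ^ (2 ^ i))"
  define A where "A = (\<Sum>i<a. ?f i)"
  define T where "T = (\<Sum>i\<in>{Suc a..k}. ?f i)"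
  have "{..k} = {..<Suc a} \<union> {Suc a..k}" using ak by auto
  then have "min_pow_sum k = (\<Sum>i<Suc a. ?f i) + T"
    unfolding min_pow_sum_def T_def by (simp only:) (rule sum.union_disjoint, auto)
  then have split: "min_pow_sum k = A + ?f a + T" unfolding A_def by simp
  have "T \<le> (\<Sum>i\<in>{Suc a..k}. (2::nat) ^ (k - i))" unfolding T_def by (rule sum_mono) simp
  then have T: "T < 2 ^ (k - a)" using sum_pow2_tail[of a k] ak by simp
  obtain b where b: "a = Suc b" using a6 by (cases a) auto
  have "A \<le> (\<Sum>i<Suc b. (2::nat) ^ (2 ^ i))" unfolding A_def b by (rule sum_mono) simp
  then have "A \<le> 2 * 2 ^ (2 ^ (a - 1))" using sum_dexp_le[of b] b by simp
  then have "k * A \<le> 2 ^ (k - 1)" using min_pow_sum_head_le[OF k a(1)] by (meson mult_le_mono2 order_trans)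
  then have "2 * (k * A) \<le> 2 ^ k" using double_pow2_pred[of k] k by linarith
  moreover have "2 * k * (?f a + T) \<le> 5 * 2 ^ k" by (rule min_pow_sum_mid_tail_le[OF a a6 ak order_refl T])
  ultimately show ?thesis unfolding split by (simp add: algebra_simps)
qed

context bdd_of_string
begin

lemma sum_width_le_min_pow_sum: "(\<Sum>j\<le>k. width G j) \<le> real (min_pow_sum k)"
proof -
  have "(\<Sum>j\<le>k. width G j) \<le> (\<Sum>j\<le>k. real (min (2 ^ j) (2 ^ (2 ^ (k - j)))))"
    using card_set_Sseq_le_pow2 card_set_Sseq_le_dexp unfolding width_def by (intro sum_mono) simp
  also have "\<dots> = (\<Sum>i\<le>k. real (min (2 ^ (k - i)) (2 ^ (2 ^ i))))"
    by (rule sum.reindex_bij_witness[of _ "\<lambda>i. k - i" "\<lambda>i. k - i"]) auto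
  finally show ?thesis unfolding min_pow_sum_def by simp
qed

lemma sum_width_le_pow2: "(\<Sum>j\<le>k. width G j) \<le> 2 * 2 ^ k - 1"
proof -
  have "(\<Sum>j\<le>k. width G j) \<le> (\<Sum>j<Suc k. (2::real) ^ j)"
    using card_set_Sseq_le_pow2 unfolding width_def lessThan_Suc_atMost by (intro sum_mono) simp
  also have "\<dots> = 2 ^ Suc k - 1" by (simp add: geometric_sum)
  finally show ?thesis by simp
qed

end

lemma small_k_bound:
  fixes D L :: real
  assumes k: "1 \<le> k" "k < 64" and D: "D \<le> 2 * 2 ^ k - 1" and L: "L \<ge> 0"
  shows "1 + 2 * real k + 5 * D + (D + 1) * L \<le> 2 ^ k / real k * (16 + 4 * L + 64 * (139 + 2 * L))"
proof -
  have "1 + 2 * real k + 5 * D + (D + 1) * L \<le> 1 + 2 * real k + 10 * 2 ^ k + (2 * 2 ^ k) * L"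
    using D L by (intro add_mono mult_right_mono) auto
  also have "\<dots> \<le> 2 ^ k * (139 + 2 * L)"
  proof -
    have "1 + 2 * real k \<le> 2 ^ k * 129" using k one_le_power[of "2::real" k] by linarith
    then show ?thesis by (simp add: algebra_simps)
  qed
  also have "\<dots> = 2 ^ k / 64 * (64 * (139 + 2 * L))" by simp
  also have "\<dots> \<le> 2 ^ k / real k * (64 * (139 + 2 * L))"
    using k L by (intro mult_right_mono divide_left_mono) auto
  also have "\<dots> \<le> 2 ^ k / real k * (16 + 4 * L + 64 * (139 + 2 * L))"
    using L by (intro mult_left_mono) auto
  finally show ?thesis .
qed

lemma large_k_bound:
  fixes D L :: real
  assumes k: "64 \<le> k" and kD: "real k * D \<le> 3 * 2 ^ k" and L: "L \<ge> 0"
  shows "1 + 2 * real k + 5 * D + (D + 1) * L \<le> 2 ^ k / real k * (16 + 4 * L)"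
proof -
  have "3 * k * k \<le> (2::nat) ^ k" using square_le_pow2[of k] k by simp
  then have "real (3 * k * k) \<le> real ((2::nat) ^ k)" by (simp only: of_nat_le_iff)
  then have "real (3 * k * k) \<le> 2 ^ k" by simp
  moreover have "real k \<le> real k * real k" using k by simp
  ultimately have sq: "real k + 2 * real k * real k \<le> 2 ^ k" by simp
  have "real k * (1 + 2 * real k + 5 * D + (D + 1) * L)
      = real k + 2 * real k * real k + 5 * (real k * D) + (real k * D + real k) * L"
    by (simp add: algebra_simps)
  also have "\<dots> \<le> 2 ^ k + 5 * (3 * 2 ^ k) + (3 * 2 ^ k + 2 ^ k) * L"
    using sq kD L by (intro add_mono mult_right_mono) (auto simp: mult.commute)
  also have "\<dots> = 2 ^ k * (16 + 4 * L)" by (simp add: algebra_simps)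
  finally show ?thesis using k by (simp add: field_simps)
qed

context bdd_of_source_string
begin

lemma sigma_len_le:
  assumes "1 \<le> k"
  shows "real_of_int (sigma_len G) + log 2 (mu s p0 p x)
    \<le> 2 ^ k / real k * (16 + 4 * log 2 (real s) + (if k < 64 then 64 * (139 + 2 * log 2 (real s)) else 0))"
proof -
  let ?D = "\<Sum>j\<le>k. width G j"
  have L: "log 2 (real s) \<ge> 0" using s_pos by simp
  show ?thesis
  proof (cases "k < 64")
    case True
    then show ?thesis
      using sigma_len_bound small_k_bound[OF assms True sum_width_le_pow2 L] by simp
  next
    case False
    have "real k * ?D \<le> real k * real (min_pow_sum k)"
      using sum_width_le_min_pow_sum by (intro mult_left_mono) auto
    also have "\<dots> \<le> real (3 * 2 ^ k)"
      using min_pow_sum_bound[of k] False by (simp only: of_nat_mult[symmetric] of_nat_le_iff)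
    finally have "real k * ?D \<le> 3 * 2 ^ k" by simp
    then show ?thesis
      using sigma_len_bound large_k_bound[of k ?D "log 2 (real s)"] False L by simp
  qed
qed

end

theorem theorem1:
  fixes s :: nat and p0 :: "nat \<Rightarrow> real" and p :: "bool \<Rightarrow> nat \<Rightarrow> nat \<Rightarrow> real"
  assumes "is_source s p0 p"
  shows "\<exists>\<delta> :: nat \<Rightarrow> real. \<delta> \<longlonglongrightarrow> 0 \<and>
    (\<forall>k n x G. k \<ge> 1 \<longrightarrow> n = 2 ^ k \<longrightarrow> length x = n \<longrightarrow> x \<in> S_dyadic \<longrightarrow>
       in_calG_star G \<longrightarrow> phi G (root G) = x \<longrightarrow> mu s p0 p x > 0 \<longrightarrow>
       real_of_int (sigma_len G) + log 2 (mu s p0 p x)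
         \<le> real n / log 2 (real n) * (16 + 4 * log 2 (real s) + \<delta> n))"
proof -
  define \<delta> where "\<delta> = (\<lambda>n::nat. if n < 2 ^ 64 then 64 * (139 + 2 * log 2 (real s)) else (0::real))"
  have "\<delta> \<longlonglongrightarrow> 0"
    unfolding \<delta>_def by (rule tendsto_eventually) (auto simp: eventually_sequentially intro: exI[of _ "2 ^ 64"])
  moreover have "real_of_int (sigma_len G) + log 2 (mu s p0 p x)
      \<le> real n / log 2 (real n) * (16 + 4 * log 2 (real s) + \<delta> n)"
    if "k \<ge> 1" "n = 2 ^ k" "length x = n" "in_calG_star G" "phi G (root G) = x" "mu s p0 p x > 0"
    for k n x G
  proof -
    interpret bdd_of_source_string G x k s p0 p
      using that assms unfolding in_calG_star_def by unfold_locales auto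
    have "(n < 2 ^ 64) = (k < 64)" using that(2) power_strict_increasing_iff[of "2::nat" k 64] by simp
    then show ?thesis using sigma_len_le[OF that(1)] that(2) unfolding \<delta>_def by (simp add: log_nat_power)
  qed
  ultimately show ?thesis by blast
qed

end
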